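(* Consider the $k$-component Gaussian mixture data model and the empirical test risk described in the context, with $\widetilde M=\alpha d$. There are constants $c=c(k)>0$ and $C=C(k)$, independent of $\lambda$, such that for all $t>0$, $$\sup_{\mathbf x\in\mathbb R^{kd}}\mathbb P\big(\|\nabla^2\widehat R(\mathbf x)-\mathbb E[\nabla^2\widehat R(\mathbf x)]\|_{op}>t\big)\le\exp\big(-[c\alpha(t\wedge t^2)-C]d\big),$$ and $$\sup_{\mathbf x\in\mathbb R^{kd}}\mathbb P\big(\|\widehat G(\mathbf x)-\mathbb E[\widehat G(\mathbf x)]\|_{op}>t\big)\le\exp\big(-[c\alpha(t\wedge t^2)-C]d\big).$$
   Context: Let $k\ge2$ and $p_1,\dots,p_k\in(0,1)$ with $\sum_ap_a=1$. Let $\mu_1,\dots,\mu_k\in\mathbb R^d$ be unit vectors and $\lambda\ge1$. A data point is $\mathbf Y=(y,Y)$, $y$ one-hot in $\mathbb R^k$ with $\mathbb P(y=e_a)=p_a$, and given $y=e_a$, $Y=\mu_a+Z$, $Z\sim\mathcal N(0,I_d/\lambda)$. For $\mathbf x=(x^1,\dots,x^k)\in(\mathbb R^d)^k$, the loss is $L(\mathbf x,\mathbf Y)=-\sum_cy_cx^c\cdot Y+\log\sum_c\exp(x^c\cdot Y)$. Given i.i.d. samples $\widetilde{\mathbf Y}^1,\dots,\widetilde{\mathbf Y}^{\widetilde M}$, $\widehat R(\mathbf x)=\frac1{\widetilde M}\sum_\ell L(\mathbf x,\widetilde{\mathbf Y}^\ell)$ and $\widehat G(\mathbf x)=\frac1{\widetilde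 M}\sum_\ell\nabla L(\mathbf x,\widetilde{\mathbf Y}^\ell)^{\otimes2}$. *)

theory Defs
  imports "HOL-Probability.Probability"
begin

text \<open>Parameters x = (x^1,...,x^k) in (R^d)^k are represented as functions
  x :: nat => nat => real, x c i being coordinate i of x^c (c < k, i < d).
  A data point is a pair (a, Y) with label a < k (y = e_a) and Y :: nat => real.\<close>

definition dotp :: "nat \<Rightarrow> (nat \<Rightarrow> real) \<Rightarrow> (nat \<Rightarrow> real) \<Rightarrow> real" where
  "dotp d u v = (\<Sum>i<d. u i * v i)"

definition loss :: "nat \<Rightarrow> nat \<Rightarrow> (nat \<Rightarrow> nat \<Rightarrow> real) \<Rightarrow> nat \<times> (nat \<Rightarrow> real) \<Rightarrow> real" where
  "loss k d x z = - dotp d (x (fst z)) (snd z) + ln (\<Sum>c<k. exp (dotp d (x c) (snd z)))"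

definition pderiv :: "((nat \<Rightarrow> nat \<Rightarrow> real) \<Rightarrow> real) \<Rightarrow> (nat \<Rightarrow> nat \<Rightarrow> real) \<Rightarrow> nat \<times> nat \<Rightarrow> real" where
  "pderiv f x ci = deriv (\<lambda>s. f (x(fst ci := (x (fst ci))(snd ci := s)))) (x (fst ci) (snd ci))"

definition grad :: "((nat \<Rightarrow> nat \<Rightarrow> real) \<Rightarrow> real) \<Rightarrow> (nat \<Rightarrow> nat \<Rightarrow> real) \<Rightarrow> nat \<times> nat \<Rightarrow> real" where
  "grad f x = pderiv f x"

definition hess :: "((nat \<Rightarrow> nat \<Rightarrow> real) \<Rightarrow> real) \<Rightarrow> (nat \<Rightarrow> nat \<Rightarrow> real)
    \<Rightarrow> nat \<times> nat \<Rightarrow> nat \<times> nat \<Rightarrow> real" where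
  "hess f x r s = pderiv (\<lambda>x'. pderiv f x' s) x r"

definition idx :: "nat \<Rightarrow> nat \<Rightarrow> (nat \<times> nat) set" where
  "idx k d = {..<k} \<times> {..<d}"

definition opnorm :: "('i set) \<Rightarrow> ('i \<Rightarrow> 'i \<Rightarrow> real) \<Rightarrow> real" where
  "opnorm I A = Sup {sqrt (\<Sum>r\<in>I. (\<Sum>s\<in>I. A r s * v s)\<^sup>2) | v. (\<Sum>s\<in>I. (v s)\<^sup>2) = 1}"

definition data_dist :: "nat \<Rightarrow> nat \<Rightarrow> (nat \<Rightarrow> real) \<Rightarrow> (nat \<Rightarrow> nat \<Rightarrow> real) \<Rightarrow> real
    \<Rightarrow> (nat \<times> (nat \<Rightarrow> real)) measure" where
  "data_dist k d p mu lam =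
     density (count_space UNIV \<Otimes>\<^sub>M (\<Pi>\<^sub>M i\<in>{..<d}. lborel))
       (\<lambda>z. ennreal (if fst z < k then
                        p (fst z) * (\<Prod>i<d. normal_density (mu (fst z) i) (1 / sqrt lam) (snd z i))
                      else 0))"

definition sample_space :: "nat \<Rightarrow> nat \<Rightarrow> nat \<Rightarrow> (nat \<Rightarrow> real) \<Rightarrow> (nat \<Rightarrow> nat \<Rightarrow> real) \<Rightarrow> real
    \<Rightarrow> (nat \<Rightarrow> nat \<times> (nat \<Rightarrow> real)) measure" where
  "sample_space M k d p mu lam = (\<Pi>\<^sub>M l\<in>{..<M}. data_dist k d p mu lam)"

definition emp_risk :: "nat \<Rightarrow> nat \<Rightarrow> nat \<Rightarrow> (nat \<Rightarrow> nat \<times> (nat \<Rightarrow> real)) \<Rightarrow> (nat \<Rightarrow> nat \<Rightarrow> real) \<Rightarrow> real" where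
  "emp_risk M k d w x = (1 / real M) * (\<Sum>l<M. loss k d x (w l))"

definition emp_G :: "nat \<Rightarrow> nat \<Rightarrow> nat \<Rightarrow> (nat \<Rightarrow> nat \<times> (nat \<Rightarrow> real)) \<Rightarrow> (nat \<Rightarrow> nat \<Rightarrow> real)
    \<Rightarrow> nat \<times> nat \<Rightarrow> nat \<times> nat \<Rightarrow> real" where
  "emp_G M k d w x r s = (1 / real M) *
     (\<Sum>l<M. grad (\<lambda>x'. loss k d x' (w l)) x r * grad (\<lambda>x'. loss k d x' (w l)) x s)"

end

theory Submission
  imports Defs
begin

text \<open>Both matrices are empirical means of i.i.d. random matrices H(z), so the deviation A
  from the mean is controlled through its bilinear forms u^T A v. For u, v of norm at most 2,
  u^T H(z) v is bounded by k (Q_u + Q_v) with Q_u = sum_c (u^c . Y)^2, because softmax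
  probabilities lie in [0,1]. A Gaussian integral shows E exp((u^c . Y)^2 / 32) <= 4 uniformly
  in lambda >= 1, so u^T H v has an exponential moment with constants depending only on k, and
  a Chernoff bound gives deviations of its empirical mean with probability
  exp(-c M min(t, t^2)). Finally, ||A|| <= 3 max |u^T A v| over a net of the unit sphere of
  R^(kd) with at most 3^(6kd) points, and the union bound over pairs of net points costs only
  a factor exp(C d).\<close>

section \<open>Gaussian integrals\<close>

lemma normal_density_mult_exp:
  assumes "\<sigma> > 0"
  shows "normal_density \<mu> \<sigma> y * exp (t * y) =
         exp (t * \<mu> + t\<^sup>2 * \<sigma>\<^sup>2 / 2) * normal_density (\<mu> + t * \<sigma>\<^sup>2) \<sigma> y"
proof -
  have "-(y - \<mu>)\<^sup>2 / (2 * \<sigma>\<^sup>2) + t * y =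
      (t * \<mu> + t\<^sup>2 * \<sigma>\<^sup>2 / 2) + (-(y - (\<mu> + t * \<sigma>\<^sup>2))\<^sup>2 / (2 * \<sigma>\<^sup>2))"
    using assms by (simp add: field_simps power2_eq_square)
  then show ?thesis unfolding normal_density_def
    by (simp add: exp_add[symmetric] mult.assoc mult.left_commute)
qed

lemma nn_integral_normal_density: "\<sigma> > 0 \<Longrightarrow> (\<integral>\<^sup>+ x. normal_density \<mu> \<sigma> x \<partial>lborel) = 1"
  by (subst nn_integral_eq_integral) auto

lemma nn_integral_normal_density_mult_exp:
  assumes "\<sigma> > 0"
  shows "(\<integral>\<^sup>+ y. ennreal (normal_density \<mu> \<sigma> y * exp (t * y)) \<partial>lborel) =
         ennreal (exp (t * \<mu> + t\<^sup>2 * \<sigma>\<^sup>2 / 2))"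
proof -
  have "(\<integral>\<^sup>+ y. ennreal (normal_density \<mu> \<sigma> y * exp (t * y)) \<partial>lborel) =
      (\<integral>\<^sup>+ y. ennreal (exp (t * \<mu> + t\<^sup>2 * \<sigma>\<^sup>2 / 2)) * ennreal (normal_density (\<mu> + t * \<sigma>\<^sup>2) \<sigma> y) \<partial>lborel)"
    using assms by (intro nn_integral_cong) (simp add: normal_density_mult_exp ennreal_mult)
  also have "\<dots> = ennreal (exp (t * \<mu> + t\<^sup>2 * \<sigma>\<^sup>2 / 2))"
    using assms by (subst nn_integral_cmult) (auto simp: nn_integral_normal_density)
  finally show ?thesis .
qed

lemma nn_integral_std_normal_density_mult_exp_square:
  "(\<integral>\<^sup>+ x. ennreal (std_normal_density x * exp (x\<^sup>2 / 4)) \<partial>lborel) = ennreal (sqrt 2)"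
proof -
  have eq: "std_normal_density x * exp (x\<^sup>2 / 4) = sqrt 2 * normal_density 0 (sqrt 2) x" for x
  proof -
    have "exp (- x\<^sup>2 / 2) * exp (x\<^sup>2 / 4) = exp (- x\<^sup>2 / 4)"
      by (simp add: exp_add[symmetric])
    then show ?thesis unfolding normal_density_def
      by (simp add: real_sqrt_mult field_simps)
  qed
  show ?thesis
    by (simp add: eq ennreal_mult nn_integral_cmult nn_integral_normal_density)
qed

text \<open>Linearising the square in the exponent by a Gaussian integral reduces exponential
  moments of squares of Gaussian linear forms to the Gaussian moment generating function.\<close>

lemma exp_square_eq_nn_integral_std_normal:
  "ennreal (exp (g\<^sup>2 / 32)) = (\<integral>\<^sup>+ x. ennreal (std_normal_density x * exp ((g / 4) * x)) \<partial>lborel)"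
proof -
  have "(\<integral>\<^sup>+ x. ennreal (std_normal_density x * exp ((g / 4) * x)) \<partial>lborel) =
      ennreal (exp ((g/4) * 0 + (g/4)\<^sup>2 * 1\<^sup>2 / 2))"
    by (rule nn_integral_normal_density_mult_exp) simp
  also have "(g/4) * 0 + (g/4)\<^sup>2 * 1\<^sup>2 / 2 = g\<^sup>2 / 32" by (simp add: power2_eq_square)
  finally show ?thesis by simp
qed

section \<open>The data distribution\<close>

definition lborel_vec :: "nat \<Rightarrow> (nat \<Rightarrow> real) measure" where
  "lborel_vec d = (\<Pi>\<^sub>M i\<in>{..<d}. lborel)"

definition normal_vec_density :: "nat \<Rightarrow> (nat \<Rightarrow> real) \<Rightarrow> real \<Rightarrow> (nat \<Rightarrow> real) \<Rightarrow> real" where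
  "normal_vec_density d m \<sigma> Y = (\<Prod>i<d. normal_density (m i) \<sigma> (Y i))"

interpretation lborel_product: product_sigma_finite "\<lambda>_::nat. lborel :: real measure"
  by standard

lemma sigma_finite_lborel_vec: "sigma_finite_measure (lborel_vec d)"
  unfolding lborel_vec_def by (rule lborel_product.sigma_finite) simp

lemma measurable_lborel_vec_component[measurable]:
  "(\<lambda>Y. Y i) \<in> borel_measurable (lborel_vec d)"
proof (cases "i < d")
  case True
  then have "(\<lambda>Y. Y i) \<in> measurable (lborel_vec d) lborel"
    unfolding lborel_vec_def by (intro measurable_component_singleton) simp
  then show ?thesis using measurable_cong_sets[OF refl sets_lborel] by blast
next
  case False
  \<comment> \<open>outside the index set every point of the product space takes the value undefined\<close>
  then have "Y i = undefined" if "Y \<in> space (lborel_vec d)" for Y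
    using that by (auto simp: lborel_vec_def space_PiM PiE_def extensional_def)
  then show ?thesis by (subst measurable_cong[where g="\<lambda>_. undefined"]) auto
qed

lemma measurable_pair_count_space_nat:
  assumes "\<And>a. (\<lambda>Y. f (a, Y)) \<in> borel_measurable N"
  shows "f \<in> borel_measurable (count_space (UNIV::nat set) \<Otimes>\<^sub>M N)"
  by (rule measurable_pair_measure_countable1) (auto intro: assms)

lemma normal_vec_density_measurable[measurable]:
  "normal_vec_density d m \<sigma> \<in> borel_measurable (lborel_vec d)"
  unfolding normal_vec_density_def by measurable

lemma normal_vec_density_nonneg: "0 \<le> normal_vec_density d m \<sigma> Y"
  unfolding normal_vec_density_def by (auto intro!: prod_nonneg)

lemma nn_integral_normal_vec_density:
  assumes "\<sigma> > 0"
  shows "(\<integral>\<^sup>+ Y. ennreal (normal_vec_density d m \<sigma> Y) \<partial>lborel_vec d) = 1"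
proof -
  have "(\<integral>\<^sup>+ Y. ennreal (normal_vec_density d m \<sigma> Y) \<partial>lborel_vec d) =
      (\<integral>\<^sup>+ Y. (\<Prod>i\<in>{..<d}. ennreal (normal_density (m i) \<sigma> (Y i))) \<partial>lborel_vec d)"
    unfolding normal_vec_density_def by (intro nn_integral_cong) (simp add: prod_ennreal)
  also have "\<dots> = (\<Prod>i\<in>{..<d}. \<integral>\<^sup>+ y. ennreal (normal_density (m i) \<sigma> y) \<partial>lborel)"
    unfolding lborel_vec_def by (rule lborel_product.product_nn_integral_prod) auto
  also have "\<dots> = 1" using assms by (simp add: nn_integral_normal_density)
  finally show ?thesis .
qed

lemma nn_integral_normal_vec_density_mult_exp:
  assumes "\<sigma> > 0"
  shows "(\<integral>\<^sup>+ Y. ennreal (normal_vec_density d m \<sigma> Y * exp (t * (\<Sum>i<d. w i * Y i))) \<partial>lborel_vec d) =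
     ennreal (exp (t * (\<Sum>i<d. w i * m i) + t\<^sup>2 * \<sigma>\<^sup>2 * (\<Sum>i<d. (w i)\<^sup>2) / 2))"
proof -
  have "(\<integral>\<^sup>+ Y. ennreal (normal_vec_density d m \<sigma> Y * exp (t * (\<Sum>i<d. w i * Y i))) \<partial>lborel_vec d) =
     (\<integral>\<^sup>+ Y. (\<Prod>i\<in>{..<d}. ennreal (normal_density (m i) \<sigma> (Y i) * exp ((t * w i) * Y i))) \<partial>lborel_vec d)"
    unfolding normal_vec_density_def
    by (intro nn_integral_cong)
       (simp add: prod_ennreal sum_distrib_left exp_sum prod.distrib mult.assoc)
  also have "\<dots> = (\<Prod>i\<in>{..<d}. \<integral>\<^sup>+ y. ennreal (normal_density (m i) \<sigma> y * exp ((t * w i) * y)) \<partial>lborel)"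
    unfolding lborel_vec_def by (rule lborel_product.product_nn_integral_prod) auto
  also have "\<dots> = ennreal (\<Prod>i\<in>{..<d}. exp ((t * w i) * m i + (t * w i)\<^sup>2 * \<sigma>\<^sup>2 / 2))"
    using assms by (simp add: nn_integral_normal_density_mult_exp prod_ennreal)
  also have "(\<Prod>i\<in>{..<d}. exp ((t * w i) * m i + (t * w i)\<^sup>2 * \<sigma>\<^sup>2 / 2)) =
      exp (t * (\<Sum>i<d. w i * m i) + t\<^sup>2 * \<sigma>\<^sup>2 * (\<Sum>i<d. (w i)\<^sup>2) / 2)"
    by (simp add: exp_sum[symmetric] sum.distrib sum_distrib_left sum_divide_distrib
        algebra_simps)
  finally show ?thesis .
qed

lemma data_dist_eq_density:
  "data_dist k d p mu lam = density (count_space UNIV \<Otimes>\<^sub>M lborel_vec d)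
      (\<lambda>z. ennreal (if fst z < k then p (fst z) * normal_vec_density d (mu (fst z)) (1 / sqrt lam) (snd z)
                    else 0))"
  unfolding data_dist_def lborel_vec_def normal_vec_density_def ..

lemma sets_data_dist: "sets (data_dist k d p mu lam) = sets (count_space UNIV \<Otimes>\<^sub>M lborel_vec d)"
  unfolding data_dist_eq_density by simp

lemma measurable_data_dist:
  "f \<in> borel_measurable (count_space UNIV \<Otimes>\<^sub>M lborel_vec d) \<Longrightarrow>
   f \<in> borel_measurable (data_dist k d p mu lam)"
  using measurable_cong_sets[OF sets_data_dist refl] by blast

lemma nn_integral_data_dist:
  assumes g: "g \<in> borel_measurable (count_space UNIV \<Otimes>\<^sub>M lborel_vec d)"
  shows "(\<integral>\<^sup>+ z. g z \<partial>data_dist k d p mu lam) =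
     (\<Sum>a<k. \<integral>\<^sup>+ Y. ennreal (p a * normal_vec_density d (mu a) (1 / sqrt lam) Y) * g (a, Y) \<partial>lborel_vec d)"
proof -
  interpret Y: sigma_finite_measure "lborel_vec d" by (rule sigma_finite_lborel_vec)
  let ?\<rho> = "\<lambda>z. ennreal (if fst z < k then p (fst z) * normal_vec_density d (mu (fst z)) (1 / sqrt lam) (snd z)
                         else 0)"
  have \<rho>: "?\<rho> \<in> borel_measurable (count_space UNIV \<Otimes>\<^sub>M lborel_vec d)"
    by (rule measurable_pair_count_space_nat) (unfold fst_conv snd_conv, measurable)
  have "(\<integral>\<^sup>+ z. g z \<partial>data_dist k d p mu lam) =
      (\<integral>\<^sup>+ z. ?\<rho> z * g z \<partial>(count_space UNIV \<Otimes>\<^sub>M lborel_vec d))"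
    unfolding data_dist_eq_density by (rule nn_integral_density[OF \<rho> g])
  also have "\<dots> = (\<integral>\<^sup>+ a. \<integral>\<^sup>+ Y. ?\<rho> (a, Y) * g (a, Y) \<partial>lborel_vec d \<partial>count_space UNIV)"
    by (rule Y.nn_integral_fst[symmetric]) (use \<rho> g in measurable)
  also have "\<dots> = (\<Sum>a. \<integral>\<^sup>+ Y. ?\<rho> (a, Y) * g (a, Y) \<partial>lborel_vec d)"
    by (rule nn_integral_count_space_nat)
  also have "\<dots> = (\<Sum>a<k. \<integral>\<^sup>+ Y. ?\<rho> (a, Y) * g (a, Y) \<partial>lborel_vec d)"
    by (rule suminf_finite) auto
  finally show ?thesis by simp
qed

lemma prob_space_data_dist:
  assumes "\<forall>a<k. 0 \<le> p a" "(\<Sum>a<k. p a) = 1" "lam > 0"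
  shows "prob_space (data_dist k d p mu lam)"
proof (rule prob_spaceI)
  have "emeasure (data_dist k d p mu lam) (space (data_dist k d p mu lam)) =
      (\<integral>\<^sup>+ z. 1 \<partial>data_dist k d p mu lam)" by simp
  also have "\<dots> = (\<Sum>a<k. \<integral>\<^sup>+ Y. ennreal (p a) * ennreal (normal_vec_density d (mu a) (1 / sqrt lam) Y) \<partial>lborel_vec d)"
    using assms by (subst nn_integral_data_dist) (auto intro!: sum.cong simp: ennreal_mult normal_vec_density_nonneg)
  also have "\<dots> = (\<Sum>a<k. ennreal (p a))"
    using assms by (simp add: nn_integral_cmult nn_integral_normal_vec_density)
  also have "\<dots> = ennreal (\<Sum>a<k. p a)" by (rule sum_ennreal) (use assms in auto)
  finally show "emeasure (data_dist k d p mu lam) (space (data_dist k d p mu lam)) = 1"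
    using assms by simp
qed

lemma nn_integral_data_dist_exp_linear:
  assumes "\<forall>a<k. 0 \<le> p a" "lam > 0"
  shows "(\<integral>\<^sup>+ z. ennreal (exp (t * (\<Sum>i<d. w i * snd z i))) \<partial>data_dist k d p mu lam) =
     ennreal (\<Sum>a<k. p a * exp (t * (\<Sum>i<d. w i * mu a i) + t\<^sup>2 / lam * (\<Sum>i<d. (w i)\<^sup>2) / 2))"
proof -
  have "(\<integral>\<^sup>+ z. ennreal (exp (t * (\<Sum>i<d. w i * snd z i))) \<partial>data_dist k d p mu lam) =
     (\<Sum>a<k. \<integral>\<^sup>+ Y. ennreal (p a) *
        ennreal (normal_vec_density d (mu a) (1 / sqrt lam) Y * exp (t * (\<Sum>i<d. w i * Y i))) \<partial>lborel_vec d)"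
    using assms
    by (subst nn_integral_data_dist)
       (auto intro!: sum.cong nn_integral_cong measurable_pair_count_space_nat
             simp: ennreal_mult[symmetric] normal_vec_density_nonneg mult.assoc)
  also have "\<dots> = (\<Sum>a<k. ennreal (p a * exp (t * (\<Sum>i<d. w i * mu a i) + t\<^sup>2 / lam * (\<Sum>i<d. (w i)\<^sup>2) / 2)))"
    using assms
    by (intro sum.cong refl)
       (simp add: nn_integral_cmult nn_integral_normal_vec_density_mult_exp ennreal_mult power_divide)
  also have "\<dots> = ennreal (\<Sum>a<k. p a * exp (t * (\<Sum>i<d. w i * mu a i) + t\<^sup>2 / lam * (\<Sum>i<d. (w i)\<^sup>2) / 2))"
    using assms by (intro sum_ennreal) auto
  finally show ?thesis .
qed

lemma linear_gaussian_exponent_le: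
  fixes x m v s :: real
  assumes "\<bar>m\<bar> \<le> 2" "0 \<le> v" "v \<le> 1" "0 \<le> s" "s \<le> 4"
  shows "(x/4) * m + (x/4)\<^sup>2 * v * s / 2 \<le> 1/2 + x\<^sup>2/4"
proof -
  have "(x/4) * m \<le> \<bar>x/4\<bar> * \<bar>m\<bar>"
    by (metis abs_ge_self abs_mult)
  also have "\<dots> \<le> \<bar>x\<bar>/4 * 2"
    using mult_left_mono[OF assms(1), of "\<bar>x\<bar>/4"] by simp
  also have "\<dots> \<le> 1/2 + x\<^sup>2/8"
    using zero_le_power2[of "\<bar>x\<bar> - 2"] by (simp add: power2_eq_square algebra_simps)
  finally have "(x/4) * m \<le> 1/2 + x\<^sup>2/8" .
  moreover have "(x/4)\<^sup>2 * v * s \<le> (x/4)\<^sup>2 * 1 * 4"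
    using assms by (intro mult_mono) auto
  then have "(x/4)\<^sup>2 * v * s / 2 \<le> x\<^sup>2/8"
    by (simp add: power2_eq_square)
  ultimately show ?thesis by linarith
qed

lemma nn_integral_data_dist_exp_square:
  assumes p: "\<forall>a<k. 0 \<le> p a" "(\<Sum>a<k. p a) = 1" and lam: "lam \<ge> 1"
    and w: "(\<Sum>i<d. (w i)\<^sup>2) \<le> 4" and w_mu: "\<forall>a<k. \<bar>\<Sum>i<d. w i * mu a i\<bar> \<le> 2"
  shows "(\<integral>\<^sup>+ z. ennreal (exp ((\<Sum>i<d. w i * snd z i)\<^sup>2 / 32)) \<partial>data_dist k d p mu lam) \<le> 4"
proof -
  let ?D = "data_dist k d p mu lam"
  let ?F = "\<lambda>z x. ennreal (std_normal_density x * exp (((\<Sum>i<d. w i * snd z i) / 4) * x))"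
  interpret D: prob_space ?D using prob_space_data_dist[of k p lam] p lam by auto
  interpret D_lborel: pair_sigma_finite ?D lborel by unfold_locales
  have F: "case_prod ?F \<in> borel_measurable (?D \<Otimes>\<^sub>M lborel)"
  proof -
    have "case_prod ?F \<in> borel_measurable ((count_space UNIV \<Otimes>\<^sub>M lborel_vec d) \<Otimes>\<^sub>M lborel)"
      by measurable
    then show ?thesis
      using measurable_cong_sets[OF sets_pair_measure_cong[OF sets_data_dist refl] refl] by blast
  qed
  have inner: "(\<integral>\<^sup>+ z. ?F z x \<partial>?D) \<le> ennreal (exp (1/2)) * ennreal (std_normal_density x * exp (x\<^sup>2 / 4))"
    for x
  proof -
    have "(\<integral>\<^sup>+ z. ?F z x \<partial>?D) =
        ennreal (std_normal_density x) * (\<integral>\<^sup>+ z. ennreal (exp ((x / 4) * (\<Sum>i<d. w i * snd z i))) \<partial>?D)"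
      by (subst nn_integral_cmult[symmetric])
         (auto intro!: nn_integral_cong measurable_data_dist simp: ennreal_mult[symmetric] mult.commute)
    also have "\<dots> = ennreal (std_normal_density x) *
        ennreal (\<Sum>a<k. p a * exp ((x/4) * (\<Sum>i<d. w i * mu a i) + (x/4)\<^sup>2 / lam * (\<Sum>i<d. (w i)\<^sup>2) / 2))"
      using p lam by (subst nn_integral_data_dist_exp_linear) auto
    also have "\<dots> \<le> ennreal (std_normal_density x) * ennreal (\<Sum>a<k. p a * exp (1/2 + x\<^sup>2/4))"
      using linear_gaussian_exponent_le[OF _ _ _ _ w, of _ "1/lam" x] w_mu p lam
      by (intro mult_left_mono ennreal_leI sum_mono) (auto simp: sum_nonneg)
    also have "\<dots> = ennreal (exp (1/2)) * ennreal (std_normal_density x * exp (x\<^sup>2 / 4))"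
      using p by (simp add: sum_distrib_right[symmetric] exp_add ennreal_mult[symmetric] mult_ac)
    finally show ?thesis .
  qed
  have "(\<integral>\<^sup>+ z. ennreal (exp ((\<Sum>i<d. w i * snd z i)\<^sup>2 / 32)) \<partial>?D) = (\<integral>\<^sup>+ z. \<integral>\<^sup>+ x. ?F z x \<partial>lborel \<partial>?D)"
    by (simp add: exp_square_eq_nn_integral_std_normal)
  also have "\<dots> = (\<integral>\<^sup>+ x. \<integral>\<^sup>+ z. ?F z x \<partial>?D \<partial>lborel)"
    by (rule D_lborel.Fubini'[symmetric]) (rule F)
  also have "\<dots> \<le> (\<integral>\<^sup>+ x. ennreal (exp (1/2)) * ennreal (std_normal_density x * exp (x\<^sup>2 / 4)) \<partial>lborel)"
    by (rule nn_integral_mono) (rule inner)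
  also have "\<dots> = ennreal (exp (1/2)) * ennreal (sqrt 2)"
    by (subst nn_integral_cmult) (auto simp: nn_integral_std_normal_density_mult_exp_square)
  also have "\<dots> \<le> 4"
  proof -
    have "exp (1/2::real) \<le> 2" using real_exp_bound_lemma[of "1/2"] by simp
    moreover have "sqrt (2::real) \<le> 2" by (simp add: real_sqrt_le_iff[of 2 4, simplified])
    ultimately have "exp (1/2::real) * sqrt 2 \<le> 2 * 2" by (intro mult_mono) auto
    then show ?thesis
      by (simp add: ennreal_mult[symmetric] del: ennreal_numeral) (metis ennreal_leI ennreal_numeral)
  qed
  finally show ?thesis .
qed

section \<open>Bernstein-type tail bound for empirical means\<close>

lemma exp_le_one_plus_square_exp_abs: "exp (u::real) \<le> 1 + u + u\<^sup>2 * exp \<bar>u\<bar>"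
proof -
  obtain t where t: "\<bar>t\<bar> \<le> \<bar>u\<bar>" "exp u = (\<Sum>m<2. (u ^ m) / fact m) + (exp t / fact 2) * u ^ 2"
    using Maclaurin_exp_le[of u 2] by blast
  have "exp t \<le> exp \<bar>u\<bar>" using t(1) by simp
  moreover have "exp t / fact 2 = exp t / 2" by (simp add: fact_numeral)
  ultimately have "exp t / fact 2 \<le> exp \<bar>u\<bar>"
    using exp_gt_zero[of t] by linarith
  then have "(exp t / fact 2) * u ^ 2 \<le> u\<^sup>2 * exp \<bar>u\<bar>"
    by (metis mult.commute mult_right_mono zero_le_power2)
  moreover have "(\<Sum>m<2. (u ^ m) / fact m) = 1 + u" by (simp add: numeral_2_eq_2)
  ultimately show ?thesis using t(2) by simp
qed

lemma power2_le_two_exp: "0 \<le> (y::real) \<Longrightarrow> y\<^sup>2 \<le> 2 * exp y"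
proof -
  assume y: "0 \<le> y"
  obtain t where "exp y = (\<Sum>m<3. (y ^ m) / fact m) + (exp t / fact 3) * y ^ 3"
    using Maclaurin_exp_le[of y 3] by blast
  moreover have "(\<Sum>m<3. (y ^ m) / fact m) = 1 + y + y\<^sup>2 / 2"
    by (simp add: numeral_3_eq_3 fact_numeral power2_eq_square)
  moreover have "0 \<le> (exp t / fact 3) * y ^ 3" using y by simp
  ultimately show ?thesis using y by simp
qed

lemma square_mult_exp_le:
  fixes \<eta> \<theta> y m :: real
  assumes "\<eta> > 0" "\<bar>\<theta>\<bar> \<le> \<eta> / 4"
  shows "(y - m)\<^sup>2 * exp (\<bar>\<theta>\<bar> * \<bar>y - m\<bar>) \<le> 32 / \<eta>\<^sup>2 * exp (\<eta> * \<bar>m\<bar>) * exp (\<eta> * \<bar>y\<bar>)"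
proof -
  let ?a = "\<bar>y - m\<bar>"
  have "(\<eta> * ?a / 4)\<^sup>2 \<le> 2 * exp (\<eta> * ?a / 4)" using assms by (intro power2_le_two_exp) auto
  then have a2: "?a\<^sup>2 \<le> 32 / \<eta>\<^sup>2 * exp (\<eta> * ?a / 4)" using assms
    by (simp add: power_mult_distrib field_simps power2_eq_square)
  have e: "exp (\<bar>\<theta>\<bar> * ?a) \<le> exp (\<eta> * ?a / 4)"
    using mult_right_mono[OF assms(2), of ?a] by simp
  have "(y - m)\<^sup>2 * exp (\<bar>\<theta>\<bar> * ?a) = ?a\<^sup>2 * exp (\<bar>\<theta>\<bar> * ?a)" by simp
  also have "\<dots> \<le> 32 / \<eta>\<^sup>2 * exp (\<eta> * ?a / 4) * exp (\<eta> * ?a / 4)"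
    using a2 e by (intro mult_mono) auto
  also have "\<dots> = 32 / \<eta>\<^sup>2 * exp (\<eta> * ?a / 2)" by (simp add: mult.assoc exp_add[symmetric])
  also have "\<dots> \<le> 32 / \<eta>\<^sup>2 * exp (\<eta> * \<bar>m\<bar> + \<eta> * \<bar>y\<bar>)"
  proof -
    have "?a \<le> \<bar>m\<bar> + \<bar>y\<bar>" by simp
    then have "\<eta> * ?a \<le> \<eta> * (\<bar>m\<bar> + \<bar>y\<bar>)" using assms by (intro mult_left_mono) auto
    moreover have "0 \<le> \<eta> * ?a" using assms by simp
    ultimately have "\<eta> * ?a / 2 \<le> \<eta> * \<bar>m\<bar> + \<eta> * \<bar>y\<bar>" by (simp add: distrib_left)
    then show ?thesis by (intro mult_left_mono) auto
  qed
  finally show ?thesis by (simp add: exp_add)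
qed

lemma abs_le_exp_mult_abs_div:
  fixes \<eta> y :: real
  assumes "\<eta> > 0"
  shows "\<bar>y\<bar> \<le> exp (\<eta> * \<bar>y\<bar>) / \<eta>"
proof -
  have "\<eta> * \<bar>y\<bar> \<le> exp (\<eta> * \<bar>y\<bar>)" using exp_ge_add_one_self[of "\<eta> * \<bar>y\<bar>"] by linarith
  then show ?thesis using assms by (simp add: field_simps)
qed

lemma (in prob_space) exp_moment_integrable:
  assumes [measurable]: "f \<in> borel_measurable M" and "\<eta> > 0"
    and K: "(\<integral>\<^sup>+x. ennreal (exp (\<eta> * \<bar>f x\<bar>)) \<partial>M) \<le> ennreal K" "K \<ge> 0"
  shows "integrable M (\<lambda>x. exp (\<eta> * \<bar>f x\<bar>))" "(\<integral>x. exp (\<eta> * \<bar>f x\<bar>) \<partial>M) \<le> K"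
    and "integrable M f"
proof -
  show int_exp: "integrable M (\<lambda>x. exp (\<eta> * \<bar>f x\<bar>))"
    by (rule integrableI_nonneg) (use le_less_trans[OF K(1) ennreal_less_top] in auto)
  have "ennreal (\<integral>x. exp (\<eta> * \<bar>f x\<bar>) \<partial>M) = (\<integral>\<^sup>+x. ennreal (exp (\<eta> * \<bar>f x\<bar>)) \<partial>M)"
    by (rule nn_integral_eq_integral[symmetric]) (use int_exp in auto)
  then have "ennreal (\<integral>x. exp (\<eta> * \<bar>f x\<bar>) \<partial>M) \<le> ennreal K" using K(1) by simp
  then show "(\<integral>x. exp (\<eta> * \<bar>f x\<bar>) \<partial>M) \<le> K" using K(2) by simp
  show "integrable M f"
  proof (rule Bochner_Integration.integrable_bound[of _ "\<lambda>x. exp (\<eta> * \<bar>f x\<bar>) / \<eta>"])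
    show "integrable M (\<lambda>x. exp (\<eta> * \<bar>f x\<bar>) / \<eta>)" using int_exp by simp
    show "AE x in M. norm (f x) \<le> norm (exp (\<eta> * \<bar>f x\<bar>) / \<eta>)"
      using abs_le_exp_mult_abs_div[OF \<open>\<eta> > 0\<close>] \<open>\<eta> > 0\<close> by simp
  qed simp
qed

lemma (in prob_space) abs_expectation_le_exp_moment:
  assumes [measurable]: "f \<in> borel_measurable M" and "\<eta> > 0"
    and K: "(\<integral>\<^sup>+x. ennreal (exp (\<eta> * \<bar>f x\<bar>)) \<partial>M) \<le> ennreal K" "K \<ge> 0"
  shows "\<eta> * \<bar>\<integral>x. f x \<partial>M\<bar> \<le> K"
proof -
  note int = exp_moment_integrable[OF assms]
  have "(\<integral>x. \<bar>f x\<bar> \<partial>M) \<le> (\<integral>x. exp (\<eta> * \<bar>f x\<bar>) \<partial>M) / \<eta>"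
    using integral_mono[of M "\<lambda>x. \<bar>f x\<bar>" "\<lambda>x. exp (\<eta> * \<bar>f x\<bar>) / \<eta>"]
      abs_le_exp_mult_abs_div[OF \<open>\<eta> > 0\<close>] int by simp
  then have "\<bar>\<integral>x. f x \<partial>M\<bar> \<le> (\<integral>x. exp (\<eta> * \<bar>f x\<bar>) \<partial>M) / \<eta>"
    by (rule order_trans[OF integral_abs_bound])
  then show ?thesis using int(2) \<open>\<eta> > 0\<close> by (simp add: field_simps)
qed

definition mgf_const :: "real \<Rightarrow> real \<Rightarrow> real" where
  "mgf_const \<eta> K = 32 * exp K * K / \<eta>\<^sup>2"

lemma (in prob_space) centered_mgf_le:
  assumes [measurable]: "f \<in> borel_measurable M" and \<eta>: "\<eta> > 0"
    and K: "(\<integral>\<^sup>+x. ennreal (exp (\<eta> * \<bar>f x\<bar>)) \<partial>M) \<le> ennreal K" "K \<ge> 0"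
    and \<theta>: "\<bar>\<theta>\<bar> \<le> \<eta> / 4"
  shows "(\<integral>\<^sup>+x. ennreal (exp (\<theta> * (f x - (\<integral>x. f x \<partial>M)))) \<partial>M) \<le> ennreal (exp (\<theta>\<^sup>2 * mgf_const \<eta> K))"
proof -
  define E where "E x = exp (\<eta> * \<bar>f x\<bar>)" for x
  define m where "m = (\<integral>x. f x \<partial>M)"
  note int_E = exp_moment_integrable(1,2)[OF assms(1-4), folded E_def]
  note int_f = exp_moment_integrable(3)[OF assms(1-4)]
  have "\<eta> * \<bar>m\<bar> \<le> K" unfolding m_def by (rule abs_expectation_le_exp_moment[OF assms(1-4)])
  define h where "h x = (f x - m)\<^sup>2 * exp (\<bar>\<theta>\<bar> * \<bar>f x - m\<bar>)" for x
  have [measurable]: "h \<in> borel_measurable M" unfolding h_def by measurable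
  have h_le: "h x \<le> 32 / \<eta>\<^sup>2 * exp (\<eta> * \<bar>m\<bar>) * E x" for x
    unfolding h_def E_def by (rule square_mult_exp_le[OF \<eta> \<theta>])
  have nonneg: "0 \<le> h x" "0 \<le> E x" for x unfolding h_def E_def by simp_all
  have int_h: "integrable M h"
    by (rule Bochner_Integration.integrable_bound[of _ "\<lambda>x. 32 / \<eta>\<^sup>2 * exp (\<eta> * \<bar>m\<bar>) * E x"])
       (use int_E h_le nonneg in \<open>auto simp: abs_of_nonneg\<close>)
  have "(\<integral>x. h x \<partial>M) \<le> (\<integral>x. 32 / \<eta>\<^sup>2 * exp (\<eta> * \<bar>m\<bar>) * E x \<partial>M)"
    by (rule integral_mono) (use int_E int_h h_le in auto)
  also have "\<dots> = 32 / \<eta>\<^sup>2 * exp (\<eta> * \<bar>m\<bar>) * (\<integral>x. E x \<partial>M)" by simp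
  also have "\<dots> \<le> 32 / \<eta>\<^sup>2 * exp K * K"
    using \<open>\<eta> * \<bar>m\<bar> \<le> K\<close> int_E(2) \<eta>
    by (intro mult_mono) (auto intro: integral_nonneg_AE simp: E_def)
  finally have int_h_le: "(\<integral>x. h x \<partial>M) \<le> mgf_const \<eta> K" by (simp add: mgf_const_def)
  define g where "g x = 1 + \<theta> * (f x - m) + \<theta>\<^sup>2 * h x" for x
  have exp_le_g: "exp (\<theta> * (f x - m)) \<le> g x" for x
    using exp_le_one_plus_square_exp_abs[of "\<theta> * (f x - m)"]
    by (simp add: g_def h_def power_mult_distrib abs_mult)
  have "(\<integral>\<^sup>+x. ennreal (exp (\<theta> * (f x - m))) \<partial>M) \<le> (\<integral>\<^sup>+x. ennreal (g x) \<partial>M)"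
    by (rule nn_integral_mono) (use exp_le_g in \<open>auto intro: ennreal_leI\<close>)
  also have "\<dots> = ennreal (\<integral>x. g x \<partial>M)"
  proof (rule nn_integral_eq_integral)
    show "integrable M g" unfolding g_def using int_f int_h by auto
    show "AE x in M. 0 \<le> g x" using exp_le_g by (auto intro: order_trans[OF exp_ge_zero])
  qed
  also have "(\<integral>x. g x \<partial>M) = 1 + \<theta>\<^sup>2 * (\<integral>x. h x \<partial>M)"
    unfolding g_def using int_f int_h by (simp add: prob_space m_def)
  also have "\<dots> \<le> 1 + \<theta>\<^sup>2 * mgf_const \<eta> K"
    using int_h_le by (simp add: mult_left_mono)
  also have "\<dots> \<le> exp (\<theta>\<^sup>2 * mgf_const \<eta> K)"
    by (rule exp_ge_add_one_self[unfolded add.commute[of _ 1]])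
  finally show ?thesis unfolding m_def by (simp add: ennreal_leI)
qed

definition chernoff_rate :: "real \<Rightarrow> real \<Rightarrow> real" where
  "chernoff_rate \<eta> K = min (1 / (4 * mgf_const \<eta> K)) (\<eta> / 8)"

lemma chernoff_exponent_le:
  fixes V \<eta> \<tau> :: real
  assumes "V > 0" "\<eta> > 0" "\<tau> > 0" and \<theta>: "\<theta> = min (\<eta>/4) (\<tau>/(2*V))"
  shows "\<theta>\<^sup>2 * V - \<theta> * \<tau> \<le> - (min (1/(4*V)) (\<eta>/8) * min \<tau> (\<tau>\<^sup>2))"
proof (cases "\<tau>/(2*V) \<le> \<eta>/4")
  case True
  then have \<theta>': "\<theta> = \<tau>/(2*V)" using \<theta> by simp
  have "\<theta>\<^sup>2 * V - \<theta> * \<tau> = - (\<tau>\<^sup>2 / (4*V))"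
    unfolding \<theta>' using assms(1) by (simp add: field_simps power2_eq_square)
  moreover have "min (1/(4*V)) (\<eta>/8) * min \<tau> (\<tau>\<^sup>2) \<le> (1/(4*V)) * \<tau>\<^sup>2"
    using assms by (intro mult_mono) auto
  ultimately show ?thesis by simp
next
  case False
  then have \<theta>': "\<theta> = \<eta>/4" using \<theta> by simp
  then have "\<theta> < \<tau>/(2*V)" using False by simp
  then have "\<theta> * (2*V) < \<tau>" using assms(1) by (simp add: less_divide_eq)
  then have "\<theta> * V \<le> \<tau> / 2" by (simp add: mult.commute mult.left_commute)
  then have "\<theta> * (\<theta> * V) \<le> \<theta> * (\<tau> / 2)"
    by (rule mult_left_mono) (simp add: \<theta>' assms(2) less_imp_le)
  then have "\<theta>\<^sup>2 * V - \<theta> * \<tau> \<le> - (\<eta> / 8 * \<tau>)" unfolding \<theta>' by (simp add: power2_eq_square algebra_simps)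
  moreover have "min (1/(4*V)) (\<eta>/8) * min \<tau> (\<tau>\<^sup>2) \<le> (\<eta>/8) * \<tau>"
    using assms by (intro mult_mono) auto
  ultimately show ?thesis by simp
qed

lemma measure_empirical_mean_ge_le_mgf:
  fixes D :: "'a measure" and f :: "'a \<Rightarrow> real"
  assumes "prob_space D" and [measurable]: "f \<in> borel_measurable D" and "\<theta> > 0"
    and mgf: "(\<integral>\<^sup>+x. ennreal (exp (\<theta> * (f x - m))) \<partial>D) \<le> ennreal B" and B: "B \<ge> 0"
    and "M \<ge> 1"
  shows "measure (\<Pi>\<^sub>M l\<in>{..<M}. D) {w \<in> space (\<Pi>\<^sub>M l\<in>{..<M}. D). \<tau> < (\<Sum>l<M. f (w l)) / real M - m}
         \<le> exp (- (\<theta> * real M * \<tau>)) * B ^ M"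
proof -
  interpret D: prob_space D by fact
  interpret P: finite_product_prob_space "\<lambda>_. D" "{..<M}" by unfold_locales auto
  let ?\<Omega> = "\<Pi>\<^sub>M l\<in>{..<M}. D"
  define G where "G w = (\<Prod>l\<in>{..<M}. ennreal (exp (\<theta> * (f (w l) - m))))" for w
  have [measurable]: "G \<in> borel_measurable ?\<Omega>" unfolding G_def by measurable
  define c where "c = exp (- (\<theta> * real M * \<tau>))"
  have c: "c > 0" unfolding c_def by simp
  define A where "A = {w \<in> space ?\<Omega>. \<tau> < (\<Sum>l<M. f (w l)) / real M - m}"
  have "A \<subseteq> {w \<in> space ?\<Omega>. 1 \<le> ennreal c * G w}"
  proof
    fix w assume w: "w \<in> A"
    then have "real M * \<tau> < (\<Sum>l<M. f (w l)) - real M * m"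
      using \<open>M \<ge> 1\<close> unfolding A_def by (simp add: field_simps)
    then have "\<theta> * (real M * \<tau>) < \<theta> * ((\<Sum>l<M. f (w l)) - real M * m)"
      using \<open>\<theta> > 0\<close> by simp
    then have "0 < \<theta> * (\<Sum>l<M. (f (w l) - m)) - \<theta> * real M * \<tau>"
      by (simp add: sum_subtractf algebra_simps)
    then have "1 \<le> exp (- (\<theta> * real M * \<tau>) + (\<Sum>l<M. \<theta> * (f (w l) - m)))"
      by (simp add: sum_distrib_left)
    also have "\<dots> = c * (\<Prod>l\<in>{..<M}. exp (\<theta> * (f (w l) - m)))"
      unfolding c_def by (simp add: exp_add exp_sum exp_minus exp_diff divide_inverse mult.commute)
    finally have "ennreal 1 \<le> ennreal (c * (\<Prod>l\<in>{..<M}. exp (\<theta> * (f (w l) - m))))"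
      by (rule ennreal_leI)
    also have "\<dots> = ennreal c * G w"
      unfolding G_def using c by (subst ennreal_mult) (auto intro: prod_nonneg simp: prod_ennreal)
    finally show "w \<in> {w \<in> space ?\<Omega>. 1 \<le> ennreal c * G w}" using w unfolding A_def by simp
  qed
  then have "emeasure ?\<Omega> A \<le> emeasure ?\<Omega> {w \<in> space ?\<Omega>. 1 \<le> ennreal c * G w}"
    by (rule emeasure_mono) measurable
  also have "\<dots> \<le> ennreal c * (\<integral>\<^sup>+ w. G w * indicator (space ?\<Omega>) w \<partial>?\<Omega>)"
    by (rule nn_integral_Markov_inequality) auto
  also have "(\<integral>\<^sup>+ w. G w * indicator (space ?\<Omega>) w \<partial>?\<Omega>) = (\<integral>\<^sup>+ w. G w \<partial>?\<Omega>)"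
    by (intro nn_integral_cong) auto
  also have "\<dots> = (\<Prod>l\<in>{..<M}. \<integral>\<^sup>+ x. ennreal (exp (\<theta> * (f x - m))) \<partial>D)"
    unfolding G_def by (rule P.product_nn_integral_prod) auto
  also have "\<dots> \<le> (\<Prod>l\<in>{..<M}. ennreal B)"
    by (intro prod_mono_ennreal mgf)
  also have "\<dots> = ennreal (B ^ M)" by (simp add: ennreal_power B)
  finally have "emeasure ?\<Omega> A \<le> ennreal c * ennreal (B ^ M)"
    by (simp add: mult_left_mono)
  then have "emeasure ?\<Omega> A \<le> ennreal (c * B ^ M)"
    using c B by (simp add: ennreal_mult)
  then show ?thesis
    using c B unfolding A_def c_def by (simp add: P.emeasure_eq_measure)
qed

lemma empirical_mean_upper_tail:
  fixes D :: "'a measure" and f :: "'a \<Rightarrow> real"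
  assumes D: "prob_space D" and [measurable]: "f \<in> borel_measurable D" and \<eta>: "\<eta> > 0"
    and K: "(\<integral>\<^sup>+x. ennreal (exp (\<eta> * \<bar>f x\<bar>)) \<partial>D) \<le> ennreal K" "K \<ge> 1"
    and M: "M \<ge> 1" and \<tau>: "\<tau> > 0"
  shows "measure (\<Pi>\<^sub>M l\<in>{..<M}. D) {w \<in> space (\<Pi>\<^sub>M l\<in>{..<M}. D).
            \<tau> < (\<Sum>l<M. f (w l)) / real M - (\<integral>x. f x \<partial>D)}
         \<le> exp (- (real M * chernoff_rate \<eta> K * min \<tau> (\<tau>\<^sup>2)))"
proof -
  interpret prob_space D by (rule D)
  define V where "V = mgf_const \<eta> K"
  have V: "V > 0" unfolding V_def mgf_const_def using K \<eta> by simp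
  define \<theta> where "\<theta> = min (\<eta>/4) (\<tau>/(2*V))"
  have \<theta>: "\<theta> > 0" "\<bar>\<theta>\<bar> \<le> \<eta>/4" unfolding \<theta>_def using V \<eta> \<tau> by auto
  have "measure (\<Pi>\<^sub>M l\<in>{..<M}. D) {w \<in> space (\<Pi>\<^sub>M l\<in>{..<M}. D).
            \<tau> < (\<Sum>l<M. f (w l)) / real M - (\<integral>x. f x \<partial>D)}
      \<le> exp (- (\<theta> * real M * \<tau>)) * exp (\<theta>\<^sup>2 * V) ^ M"
    using centered_mgf_le[OF _ \<eta> K(1) _ \<theta>(2)] K(2)
    by (intro measure_empirical_mean_ge_le_mgf[OF D _ \<theta>(1) _ _ M]) (auto simp: V_def)
  also have "\<dots> = exp (real M * (\<theta>\<^sup>2 * V - \<theta> * \<tau>))"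
    by (simp add: exp_of_nat_mult[symmetric] exp_add[symmetric] algebra_simps)
  also have "\<dots> \<le> exp (real M * - (chernoff_rate \<eta> K * min \<tau> (\<tau>\<^sup>2)))"
    using mult_left_mono[OF chernoff_exponent_le[OF V \<eta> \<tau> \<theta>_def], of "real M"]
    unfolding chernoff_rate_def V_def by simp
  finally show ?thesis by (simp add: mult.assoc)
qed

lemma empirical_mean_tail:
  fixes D :: "'a measure" and f :: "'a \<Rightarrow> real"
  assumes D: "prob_space D" and [measurable]: "f \<in> borel_measurable D" and \<eta>: "\<eta> > 0"
    and K: "(\<integral>\<^sup>+x. ennreal (exp (\<eta> * \<bar>f x\<bar>)) \<partial>D) \<le> ennreal K" "K \<ge> 1"
    and M: "M \<ge> 1" and \<tau>: "\<tau> > 0"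
  shows "measure (\<Pi>\<^sub>M l\<in>{..<M}. D) {w \<in> space (\<Pi>\<^sub>M l\<in>{..<M}. D).
            \<tau> < \<bar>(\<Sum>l<M. f (w l)) / real M - (\<integral>x. f x \<partial>D)\<bar>}
         \<le> 2 * exp (- (real M * chernoff_rate \<eta> K * min \<tau> (\<tau>\<^sup>2)))"
proof -
  let ?\<Omega> = "\<Pi>\<^sub>M l\<in>{..<M}. D"
  let ?A = "{w \<in> space ?\<Omega>. \<tau> < (\<Sum>l<M. f (w l)) / real M - (\<integral>x. f x \<partial>D)}"
  let ?B = "{w \<in> space ?\<Omega>. \<tau> < (\<Sum>l<M. - f (w l)) / real M - (\<integral>x. - f x \<partial>D)}"
  have eq: "{w \<in> space ?\<Omega>. \<tau> < \<bar>(\<Sum>l<M. f (w l)) / real M - (\<integral>x. f x \<partial>D)\<bar>} = ?A \<union> ?B"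
    by (auto simp: sum_negf abs_if)
  have "measure ?\<Omega> (?A \<union> ?B) \<le> measure ?\<Omega> ?A + measure ?\<Omega> ?B"
    by (rule measure_Un_le) measurable
  also have "\<dots> \<le> exp (- (real M * chernoff_rate \<eta> K * min \<tau> (\<tau>\<^sup>2))) +
      exp (- (real M * chernoff_rate \<eta> K * min \<tau> (\<tau>\<^sup>2)))"
    by (intro add_mono empirical_mean_upper_tail[OF D _ \<eta> _ K(2) M \<tau>]) (use K(1) in auto)
  finally show ?thesis unfolding eq by simp
qed

section \<open>Nets and the operator norm\<close>

definition int_l1_ball :: "'i set \<Rightarrow> nat \<Rightarrow> ('i \<Rightarrow> int) set" where
  "int_l1_ball I L = {z. (\<forall>r. r \<notin> I \<longrightarrow> z r = 0) \<and> (\<Sum>r\<in>I. \<bar>z r\<bar>) \<le> int L}"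

lemma sum_two_mult_three_power_less: "(\<Sum>n\<le>L. 2 * 3 ^ (L - n)) < (3::nat) ^ (L + 1)"
proof (induction L)
  case 0 then show ?case by simp
next
  case (Suc L)
  have "(\<Sum>n\<le>Suc L. 2 * 3 ^ (Suc L - n)) = 3 * (\<Sum>n\<le>L. 2 * 3 ^ (L - n)::nat) + 2"
    by (simp add: sum_distrib_left Suc_diff_le)
  then show ?case using Suc.IH by simp
qed

lemma int_l1_ball_empty: "int_l1_ball {} L = {\<lambda>_. 0}"
  unfolding int_l1_ball_def by auto

lemma int_l1_ball_insert_subset:
  assumes "i \<notin> I" "finite I"
  shows "int_l1_ball (insert i I) L \<subseteq>
    (\<Union>n\<in>{..L}. \<Union>s\<in>{1, -1}. (\<lambda>z. z(i := s * int n)) ` int_l1_ball I (L - n))"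
proof
  fix z assume z: "z \<in> int_l1_ball (insert i I) L"
  define n where "n = nat \<bar>z i\<bar>"
  define z' where "z' = z(i := 0)"
  have sum: "(\<Sum>r\<in>insert i I. \<bar>z r\<bar>) = \<bar>z i\<bar> + (\<Sum>r\<in>I. \<bar>z r\<bar>)" using assms by simp
  have "0 \<le> (\<Sum>r\<in>I. \<bar>z r\<bar>)" by (rule sum_nonneg) simp
  moreover have "(\<Sum>r\<in>insert i I. \<bar>z r\<bar>) \<le> int L" using z unfolding int_l1_ball_def by auto
  ultimately have "n \<le> L" using sum unfolding n_def by linarith
  moreover have "(\<Sum>r\<in>I. \<bar>z' r\<bar>) = (\<Sum>r\<in>I. \<bar>z r\<bar>)"
    unfolding z'_def using assms by (intro sum.cong) auto
  ultimately have "z' \<in> int_l1_ball I (L - n)"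
    using z sum unfolding int_l1_ball_def z'_def n_def by auto
  moreover have "z = z'(i := (if z i \<ge> 0 then 1 else -1) * int n)"
    unfolding z'_def n_def by (auto simp: fun_eq_iff)
  ultimately show "z \<in> (\<Union>n\<in>{..L}. \<Union>s\<in>{1, -1}. (\<lambda>z. z(i := s * int n)) ` int_l1_ball I (L - n))"
    using \<open>n \<le> L\<close> by (cases "z i \<ge> 0") auto
qed

lemma finite_card_int_l1_ball:
  "finite I \<Longrightarrow> finite (int_l1_ball I L) \<and> card (int_l1_ball I L) \<le> 3 ^ (L + card I)"
proof (induction I arbitrary: L rule: finite_induct)
  case empty
  then show ?case by (simp add: int_l1_ball_empty one_le_power)
next
  case (insert i I)
  let ?U = "\<lambda>n. \<Union>s\<in>{1, -1::int}. (\<lambda>z. z(i := s * int n)) ` int_l1_ball I (L - n)"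
  have card_U: "card (?U n) \<le> 2 * 3 ^ (L - n + card I)" for n
  proof -
    have "card (?U n) \<le> (\<Sum>s\<in>{1, -1::int}. card ((\<lambda>z. z(i := s * int n)) ` int_l1_ball I (L - n)))"
      by (rule card_UN_le) simp
    also have "\<dots> \<le> (\<Sum>s\<in>{1, -1::int}. card (int_l1_ball I (L - n)))"
      by (intro sum_mono card_image_le) (use insert.IH in auto)
    finally show ?thesis using insert.IH[of "L - n"] by simp
  qed
  have "card (\<Union>n\<in>{..L}. ?U n) \<le> (\<Sum>n\<le>L. card (?U n))"
    by (rule card_UN_le) simp
  also have "\<dots> \<le> (\<Sum>n\<le>L. 2 * 3 ^ (L - n + card I))"
    by (rule sum_mono) (rule card_U)
  also have "\<dots> = (\<Sum>n\<le>L. 2 * 3 ^ (L - n)) * 3 ^ card I"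
    unfolding sum_distrib_right by (intro sum.cong refl) (simp only: power_add mult.assoc)
  also have "\<dots> \<le> 3 ^ (L + 1) * 3 ^ card I"
    using sum_two_mult_three_power_less[of L] by (intro mult_right_mono) auto
  also have "\<dots> = 3 ^ (L + card (insert i I))" using insert by (simp add: power_add)
  finally have "card (\<Union>n\<in>{..L}. ?U n) \<le> 3 ^ (L + card (insert i I))" .
  moreover have "finite (\<Union>n\<in>{..L}. ?U n)" using insert.IH by auto
  moreover note int_l1_ball_insert_subset[OF insert(2,1), of L]
  ultimately show ?case by (meson card_mono finite_subset order_trans)
qed

definition matvec :: "'i set \<Rightarrow> ('i \<Rightarrow> 'i \<Rightarrow> real) \<Rightarrow> ('i \<Rightarrow> real) \<Rightarrow> 'i \<Rightarrow> real" where
  "matvec I A v r = (\<Sum>s\<in>I. A r s * v s)"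

definition bilin :: "'i set \<Rightarrow> ('i \<Rightarrow> 'i \<Rightarrow> real) \<Rightarrow> ('i \<Rightarrow> real) \<Rightarrow> ('i \<Rightarrow> real) \<Rightarrow> real" where
  "bilin I A u v = (\<Sum>r\<in>I. u r * matvec I A v r)"

text \<open>The net is the unit sphere rounded coordinatewise to the grid of mesh 1/(4 sqrt |I|),
  so that rounding moves a unit vector by at most 1/8.\<close>

definition net_step :: "'i set \<Rightarrow> real" where
  "net_step I = 1 / (4 * sqrt (card I))"

definition net_round :: "'i set \<Rightarrow> ('i \<Rightarrow> real) \<Rightarrow> 'i \<Rightarrow> real" where
  "net_round I x r = (if r \<in> I then net_step I * of_int (round (x r / net_step I)) else 0)"

definition sphere_net :: "'i set \<Rightarrow> ('i \<Rightarrow> real) set" where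
  "sphere_net I = net_round I ` {x. (\<Sum>r\<in>I. (x r)\<^sup>2) = 1}"

lemma power2_L2_set: "(L2_set v I)\<^sup>2 = (\<Sum>r\<in>I. (v r)\<^sup>2)"
  unfolding L2_set_def by (simp add: sum_nonneg)

lemma abs_sum_mult_le_L2_set: "\<bar>\<Sum>r\<in>I. a r * b r\<bar> \<le> L2_set a I * L2_set b I"
  using sum_abs[of "\<lambda>r. a r * b r" I] L2_set_mult_ineq[of a b I] by (simp add: abs_mult)

lemma sum_power2_indicator: "finite I \<Longrightarrow> i \<in> I \<Longrightarrow> (\<Sum>s\<in>I. (if s = i then 1 else 0::real)\<^sup>2) = 1"
  by (simp add: if_distrib[of "\<lambda>x. x\<^sup>2"] cong: if_cong)

lemma net_step_pos: "finite I \<Longrightarrow> I \<noteq> {} \<Longrightarrow> net_step I > 0"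
  unfolding net_step_def by (simp add: card_gt_0_iff)

lemma abs_sub_net_round_le:
  assumes "finite I" "I \<noteq> {}" "r \<in> I"
  shows "\<bar>x r - net_round I x r\<bar> \<le> net_step I / 2"
proof -
  let ?h = "net_step I"
  have h: "?h > 0" using net_step_pos assms by auto
  have "\<bar>x r - net_round I x r\<bar> = \<bar>?h * (x r / ?h - of_int (round (x r / ?h)))\<bar>"
    using h assms(3) unfolding net_round_def by (simp add: right_diff_distrib)
  also have "\<dots> = ?h * \<bar>x r / ?h - of_int (round (x r / ?h))\<bar>"
    using h by (simp add: abs_mult)
  also have "\<dots> \<le> ?h * (1/2)"
    using of_int_round_abs_le[of "x r / ?h"] h by (intro mult_left_mono) (auto simp: abs_minus_commute)
  finally show ?thesis by simp
qed

lemma L2_set_sub_net_round_le: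
  assumes "finite I" "I \<noteq> {}"
  shows "L2_set (\<lambda>r. x r - net_round I x r) I \<le> 1/8"
proof -
  have "(\<Sum>r\<in>I. (x r - net_round I x r)\<^sup>2) \<le> (\<Sum>r\<in>I. (net_step I / 2)\<^sup>2)"
    using abs_sub_net_round_le[OF assms, of _ x]
    by (intro sum_mono) (metis abs_ge_zero power2_abs power_mono)
  also have "\<dots> = (1/8)\<^sup>2"
    using assms unfolding net_step_def by (simp add: power_divide power_mult_distrib card_gt_0_iff)
  finally have "sqrt (\<Sum>r\<in>I. (x r - net_round I x r)\<^sup>2) \<le> sqrt ((1/8)\<^sup>2)"
    by (rule real_sqrt_le_mono)
  then show ?thesis unfolding L2_set_def by simp
qed

lemma L2_set_net_round_le:
  assumes "finite I" "I \<noteq> {}" "(\<Sum>r\<in>I. (x r)\<^sup>2) = 1"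
  shows "L2_set (net_round I x) I \<le> 2"
proof -
  have "L2_set (net_round I x) I \<le> L2_set x I + L2_set (\<lambda>r. net_round I x r - x r) I"
    using L2_set_triangle_ineq[of x "\<lambda>r. net_round I x r - x r" I] by simp
  also have "L2_set (\<lambda>r. net_round I x r - x r) I = L2_set (\<lambda>r. x r - net_round I x r) I"
    unfolding L2_set_def by (simp add: power2_commute)
  finally show ?thesis
    using L2_set_sub_net_round_le[OF assms(1,2), of x] assms(3) by (simp add: L2_set_def)
qed

lemma sum_power2_sphere_net_le:
  assumes "finite I" "I \<noteq> {}" "u \<in> sphere_net I"
  shows "(\<Sum>r\<in>I. (u r)\<^sup>2) \<le> 4"
proof -
  obtain x where "(\<Sum>r\<in>I. (x r)\<^sup>2) = 1" "u = net_round I x"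
    using assms(3) unfolding sphere_net_def by auto
  then have "(L2_set u I)\<^sup>2 \<le> 2\<^sup>2"
    using L2_set_net_round_le[OF assms(1,2)] by (intro power_mono) auto
  then show ?thesis by (simp add: power2_L2_set)
qed

lemma sphere_net_subset:
  assumes "finite I" "I \<noteq> {}"
  shows "sphere_net I \<subseteq> (\<lambda>z r. net_step I * of_int (z r)) ` int_l1_ball I (5 * card I)"
proof
  fix u assume "u \<in> sphere_net I"
  then obtain x where x: "(\<Sum>r\<in>I. (x r)\<^sup>2) = 1" and u: "u = net_round I x"
    unfolding sphere_net_def by auto
  let ?h = "net_step I"
  have h: "?h > 0" using net_step_pos assms by auto
  define z where "z r = (if r \<in> I then round (x r / ?h) else 0)" for r
  have "u = (\<lambda>r. ?h * of_int (z r))" unfolding u z_def net_round_def by auto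
  moreover have "z \<in> int_l1_ball I (5 * card I)"
  proof -
    have "(\<Sum>r\<in>I. real_of_int \<bar>z r\<bar>) \<le> (\<Sum>r\<in>I. \<bar>x r\<bar> / ?h + 1/2)"
    proof (rule sum_mono)
      fix r assume "r \<in> I"
      have "\<bar>real_of_int (round (x r / ?h))\<bar> \<le> \<bar>x r / ?h\<bar> + 1/2"
        using of_int_round_abs_le[of "x r / ?h"] by linarith
      then show "real_of_int \<bar>z r\<bar> \<le> \<bar>x r\<bar> / ?h + 1/2"
        using \<open>r \<in> I\<close> h unfolding z_def by simp
    qed
    also have "\<dots> = (\<Sum>r\<in>I. \<bar>x r\<bar>) / ?h + real (card I) / 2"
      by (simp add: sum.distrib sum_divide_distrib)
    also have "\<dots> \<le> sqrt (real (card I)) / ?h + real (card I) / 2"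
    proof -
      have "(\<Sum>r\<in>I. \<bar>x r\<bar>) \<le> L2_set (\<lambda>_. 1) I * L2_set x I"
        using L2_set_mult_ineq[of "\<lambda>_. 1" x I] by simp
      then have "(\<Sum>r\<in>I. \<bar>x r\<bar>) \<le> sqrt (real (card I))"
        using x by (simp add: L2_set_def)
      then show ?thesis using h by (simp add: divide_right_mono)
    qed
    also have "sqrt (real (card I)) / ?h = 4 * real (card I)"
      unfolding net_step_def using assms by (simp add: card_gt_0_iff)
    also have "4 * real (card I) + real (card I) / 2 \<le> real (5 * card I)" by simp
    finally have "real_of_int (\<Sum>r\<in>I. \<bar>z r\<bar>) \<le> real (5 * card I)" by simp
    then have "(\<Sum>r\<in>I. \<bar>z r\<bar>) \<le> int (5 * card I)" by linarith
    then show ?thesis unfolding int_l1_ball_def z_def by auto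
  qed
  ultimately show "u \<in> (\<lambda>z r. ?h * of_int (z r)) ` int_l1_ball I (5 * card I)" by blast
qed

lemma finite_card_sphere_net:
  assumes "finite I" "I \<noteq> {}"
  shows "finite (sphere_net I) \<and> card (sphere_net I) \<le> 3 ^ (6 * card I)"
proof -
  let ?Z = "int_l1_ball I (5 * card I)"
  have Z: "finite ?Z" "card ?Z \<le> 3 ^ (6 * card I)"
    using finite_card_int_l1_ball[OF assms(1), of "5 * card I"] by (auto simp: add.commute)
  have "card (sphere_net I) \<le> card ((\<lambda>z r. net_step I * of_int (z r)) ` ?Z)"
    by (rule card_mono[OF _ sphere_net_subset[OF assms]]) (use Z in simp)
  also have "\<dots> \<le> card ?Z" by (rule card_image_le[OF Z(1)])
  finally show ?thesis using Z finite_subset[OF sphere_net_subset[OF assms]] by simp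
qed

lemma opnorm_eq_Sup: "opnorm I A = Sup {L2_set (matvec I A v) I | v. (\<Sum>s\<in>I. (v s)\<^sup>2) = 1}"
  unfolding opnorm_def L2_set_def matvec_def ..

lemma opnorm_cong:
  assumes "\<And>r s. r \<in> I \<Longrightarrow> s \<in> I \<Longrightarrow> A r s = B r s"
  shows "opnorm I A = opnorm I B"
  unfolding opnorm_def using assms by (simp cong: sum.cong)

lemma L2_set_matvec_le_frobenius:
  assumes "(\<Sum>s\<in>I. (v s)\<^sup>2) = 1"
  shows "L2_set (matvec I A v) I \<le> sqrt (\<Sum>r\<in>I. \<Sum>s\<in>I. (A r s)\<^sup>2)"
proof -
  have "(matvec I A v r)\<^sup>2 \<le> (\<Sum>s\<in>I. (A r s)\<^sup>2)" for r
    using Cauchy_Schwarz_ineq_sum[of "A r" v I] assms unfolding matvec_def by simp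
  then show ?thesis unfolding L2_set_def by (intro real_sqrt_le_mono sum_mono)
qed

lemma L2_set_matvec_le_opnorm:
  assumes "(\<Sum>s\<in>I. (v s)\<^sup>2) = 1"
  shows "L2_set (matvec I A v) I \<le> opnorm I A"
  unfolding opnorm_eq_Sup
  by (rule cSup_upper)
     (use assms in \<open>auto intro!: bdd_aboveI[where M="sqrt (\<Sum>r\<in>I. \<Sum>s\<in>I. (A r s)\<^sup>2)"]
         L2_set_matvec_le_frobenius\<close>)

lemma opnorm_le:
  assumes "finite I" "I \<noteq> {}" "\<And>v. (\<Sum>s\<in>I. (v s)\<^sup>2) = 1 \<Longrightarrow> L2_set (matvec I A v) I \<le> B"
  shows "opnorm I A \<le> B"
proof -
  obtain i where "i \<in> I" using assms(2) by auto
  then have "(\<Sum>s\<in>I. (if s = i then 1 else 0::real)\<^sup>2) = 1"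
    using sum_power2_indicator[OF assms(1)] by blast
  then show ?thesis unfolding opnorm_eq_Sup by (intro cSup_least) (use assms(3) in auto)
qed

lemma opnorm_nonneg:
  assumes "finite I" "I \<noteq> {}"
  shows "0 \<le> opnorm I A"
proof -
  obtain i where "i \<in> I" using assms(2) by auto
  then show ?thesis
    using L2_set_matvec_le_opnorm[OF sum_power2_indicator[OF assms(1)], of i A]
    by (meson L2_set_nonneg order_trans)
qed

lemma L2_set_matvec_le_opnorm_mult:
  assumes "finite I"
  shows "L2_set (matvec I A w) I \<le> opnorm I A * L2_set w I"
proof (cases "L2_set w I = 0")
  case True
  then have "matvec I A w = (\<lambda>r. 0)"
    using assms by (auto simp: L2_set_eq_0_iff matvec_def fun_eq_iff)
  then show ?thesis using True by (simp add: L2_set_def)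
next
  case False
  define c where "c = L2_set w I"
  have c: "c > 0" using False L2_set_nonneg c_def by (metis less_eq_real_def)
  define v where "v s = w s / c" for s
  have "(\<Sum>s\<in>I. (v s)\<^sup>2) = (\<Sum>s\<in>I. (w s)\<^sup>2) / c\<^sup>2"
    unfolding v_def by (simp add: power_divide sum_divide_distrib)
  also have "\<dots> = 1" using c unfolding c_def by (simp flip: power2_L2_set)
  finally have v: "(\<Sum>s\<in>I. (v s)\<^sup>2) = 1" .
  have "matvec I A w = (\<lambda>r. c * matvec I A v r)"
    using c unfolding matvec_def v_def by (auto simp: sum_distrib_left)
  then have "L2_set (matvec I A w) I = c * L2_set (matvec I A v) I"
    using c by (simp add: L2_set_right_distrib)
  also have "\<dots> \<le> c * opnorm I A" using L2_set_matvec_le_opnorm[OF v] c by simp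
  finally show ?thesis unfolding c_def by (simp add: mult.commute)
qed

lemma abs_bilin_le:
  assumes "finite I"
  shows "\<bar>bilin I A u v\<bar> \<le> L2_set u I * opnorm I A * L2_set v I"
proof -
  have "\<bar>bilin I A u v\<bar> \<le> L2_set u I * L2_set (matvec I A v) I"
    unfolding bilin_def by (rule abs_sum_mult_le_L2_set)
  also have "\<dots> \<le> L2_set u I * (opnorm I A * L2_set v I)"
    by (intro mult_left_mono L2_set_matvec_le_opnorm_mult assms) simp
  finally show ?thesis by (simp add: mult.assoc)
qed

lemma bilin_split:
  "bilin I A x y = bilin I A u v + bilin I A (\<lambda>r. x r - u r) y + bilin I A u (\<lambda>r. y r - v r)"
  unfolding bilin_def matvec_def
  by (simp add: sum_subtractf algebra_simps sum.distrib sum_distrib_left)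

text \<open>With x = A y / |A y| one has |A y| = x^T A y; rounding x and y to the net changes this
  by at most (1/8 + 2/8) ||A||.\<close>

lemma L2_set_matvec_le_net:
  assumes I: "finite I" "I \<noteq> {}"
    and T: "\<And>u v. u \<in> sphere_net I \<Longrightarrow> v \<in> sphere_net I \<Longrightarrow> \<bar>bilin I A u v\<bar> \<le> T"
    and y: "(\<Sum>s\<in>I. (y s)\<^sup>2) = 1"
  shows "L2_set (matvec I A y) I \<le> T + 3/8 * opnorm I A"
proof -
  let ?B = "opnorm I A"
  let ?N = "L2_set (matvec I A y) I"
  have B: "0 \<le> ?B" by (rule opnorm_nonneg[OF I])
  have T0: "0 \<le> T" using T[of "net_round I y" "net_round I y"] y
    unfolding sphere_net_def by (meson abs_ge_zero image_eqI mem_Collect_eq order_trans)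
  show ?thesis
  proof (cases "?N = 0")
    case True
    then show ?thesis using T0 B by simp
  next
    case False
    then have N: "?N > 0" by (simp add: less_le)
    define x where "x r = matvec I A y r / ?N" for r
    have "(\<Sum>r\<in>I. (x r)\<^sup>2) = (\<Sum>r\<in>I. (matvec I A y r)\<^sup>2) / ?N\<^sup>2"
      unfolding x_def by (simp add: power_divide sum_divide_distrib)
    also have "\<dots> = 1" using N by (simp flip: power2_L2_set)
    finally have x: "(\<Sum>r\<in>I. (x r)\<^sup>2) = 1" .
    have "bilin I A x y = (\<Sum>r\<in>I. (matvec I A y r)\<^sup>2) / ?N"
      unfolding bilin_def x_def by (simp add: sum_divide_distrib power2_eq_square)
    also have "\<dots> = ?N\<^sup>2 / ?N" by (simp only: power2_L2_set)
    also have "\<dots> = ?N" using N by (simp add: power2_eq_square)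
    finally have N_eq: "?N = bilin I A (net_round I x) (net_round I y)
        + bilin I A (\<lambda>r. x r - net_round I x r) y + bilin I A (net_round I x) (\<lambda>r. y r - net_round I y r)"
      using bilin_split[of I A x y "net_round I x" "net_round I y"] by simp
    have "L2_set y I = 1" using y by (simp add: L2_set_def)
    then have "\<bar>bilin I A (\<lambda>r. x r - net_round I x r) y\<bar> \<le> L2_set (\<lambda>r. x r - net_round I x r) I * ?B * 1"
      using abs_bilin_le[OF I(1)] by metis
    also have "\<dots> \<le> 1/8 * ?B * 1"
      using L2_set_sub_net_round_le[OF I, of x] B by (intro mult_right_mono) auto
    finally have "\<bar>bilin I A (\<lambda>r. x r - net_round I x r) y\<bar> \<le> 1/8 * ?B * 1" .
    moreover have "\<bar>bilin I A (net_round I x) (\<lambda>r. y r - net_round I y r)\<bar>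
        \<le> L2_set (net_round I x) I * ?B * L2_set (\<lambda>r. y r - net_round I y r) I"
      by (rule abs_bilin_le[OF I(1)])
    moreover have "\<dots> \<le> 2 * ?B * (1/8)"
      using L2_set_net_round_le[OF I x] L2_set_sub_net_round_le[OF I, of y] B
      by (intro mult_mono) auto
    moreover have "\<bar>bilin I A (net_round I x) (net_round I y)\<bar> \<le> T"
      using x y by (intro T) (auto simp: sphere_net_def)
    ultimately show ?thesis using N_eq by linarith
  qed
qed

lemma opnorm_le_three_net:
  assumes I: "finite I" "I \<noteq> {}"
    and T: "\<And>u v. u \<in> sphere_net I \<Longrightarrow> v \<in> sphere_net I \<Longrightarrow> \<bar>bilin I A u v\<bar> \<le> T"
  shows "opnorm I A \<le> 3 * T"
proof -
  have "opnorm I A \<le> T + 3/8 * opnorm I A"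
    by (rule opnorm_le[OF I L2_set_matvec_le_net[OF I T]])
  moreover have "0 \<le> T"
    using opnorm_nonneg[OF I, of A] calculation by linarith
  ultimately show ?thesis by linarith
qed

section \<open>Derivatives of the cross-entropy loss\<close>

definition partition_sum :: "nat \<Rightarrow> nat \<Rightarrow> (nat \<Rightarrow> nat \<Rightarrow> real) \<Rightarrow> (nat \<Rightarrow> real) \<Rightarrow> real" where
  "partition_sum k d x Y = (\<Sum>c<k. exp (dotp d (x c) Y))"

definition softmax :: "nat \<Rightarrow> nat \<Rightarrow> (nat \<Rightarrow> nat \<Rightarrow> real) \<Rightarrow> (nat \<Rightarrow> real) \<Rightarrow> nat \<Rightarrow> real" where
  "softmax k d x Y c = exp (dotp d (x c) Y) / partition_sum k d x Y"

definition loss_grad :: "nat \<Rightarrow> nat \<Rightarrow> (nat \<Rightarrow> nat \<Rightarrow> real) \<Rightarrow> nat \<times> (nat \<Rightarrow> real) \<Rightarrow> nat \<Rightarrow> nat \<Rightarrow> real" where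
  "loss_grad k d x z c i = snd z i * (softmax k d x (snd z) c - (if fst z = c then 1 else 0))"

definition loss_hess ::
    "nat \<Rightarrow> nat \<Rightarrow> (nat \<Rightarrow> nat \<Rightarrow> real) \<Rightarrow> nat \<times> (nat \<Rightarrow> real) \<Rightarrow> nat \<Rightarrow> nat \<Rightarrow> nat \<Rightarrow> nat \<Rightarrow> real" where
  "loss_hess k d x z c i c' j = snd z i * snd z j *
     (softmax k d x (snd z) c * (if c = c' then 1 else 0) - softmax k d x (snd z) c * softmax k d x (snd z) c')"

lemma dotp_fun_upd:
  assumes "i < d"
  shows "dotp d ((x(c := (x c)(i := t))) c') Y =
     dotp d (x c') Y + (if c' = c then (t - x c i) * Y i else 0)"
proof (cases "c' = c")
  case True
  have "(\<Sum>j<d. ((x c)(i := t)) j * Y j) = (\<Sum>j<d. x c j * Y j + (if j = i then (t - x c i) * Y i else 0))"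
    by (rule sum.cong) (auto simp: algebra_simps)
  also have "\<dots> = (\<Sum>j<d. x c j * Y j) + (t - x c i) * Y i"
    using assms by (simp add: sum.distrib)
  finally show ?thesis using True by (simp add: dotp_def)
qed simp

lemma partition_sum_pos: "k > 0 \<Longrightarrow> partition_sum k d x Y > 0"
  unfolding partition_sum_def by (intro sum_pos) auto

lemma softmax_nonneg: "0 \<le> softmax k d x Y c"
  unfolding softmax_def partition_sum_def by (intro divide_nonneg_nonneg sum_nonneg) auto

lemma sum_softmax: "k > 0 \<Longrightarrow> (\<Sum>c<k. softmax k d x Y c) = 1"
  using partition_sum_pos[of k d x Y]
  unfolding softmax_def by (simp add: sum_divide_distrib[symmetric] partition_sum_def)

lemma softmax_le_one: "k > 0 \<Longrightarrow> c < k \<Longrightarrow> softmax k d x Y c \<le> 1"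
  using member_le_sum[of c "{..<k}" "softmax k d x Y"] softmax_nonneg sum_softmax by fastforce


lemma has_real_derivative_loss:
  assumes "c < k" "i < d"
  shows "((\<lambda>t. loss k d (x(c := (x c)(i := t))) z) has_real_derivative loss_grad k d x z c i) (at (x c i))"
proof -
  obtain a Y where z: "z = (a, Y)" by (cases z)
  let ?t0 = "x c i"
  define E where "E c' t = exp (dotp d (x c') Y + (if c' = c then (t - ?t0) * Y i else 0))" for c' t
  have eq: "loss k d (x(c := (x c)(i := t))) z =
     - (dotp d (x a) Y + (if a = c then (t - ?t0) * Y i else 0)) + ln (\<Sum>c'<k. E c' t)" for t
    unfolding loss_def z fst_conv snd_conv dotp_fun_upd[OF assms(2)] E_def by simp
  have dS: "((\<lambda>t. \<Sum>c'<k. E c' t) has_real_derivative (\<Sum>c'<k. if c' = c then E c' t * Y i else 0)) (at t)" for t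
    unfolding E_def by (intro DERIV_sum) (auto intro!: derivative_eq_intros)
  have S0: "(\<Sum>c'<k. E c' ?t0) = partition_sum k d x Y"
    unfolding E_def partition_sum_def by (intro sum.cong) auto
  then have S_pos: "(\<Sum>c'<k. E c' ?t0) > 0" using partition_sum_pos assms by auto
  have dS0: "(\<Sum>c'<k. if c' = c then E c' ?t0 * Y i else 0) = exp (dotp d (x c) Y) * Y i"
    using assms unfolding E_def by simp
  have "((\<lambda>t. - (dotp d (x a) Y + (if a = c then (t - ?t0) * Y i else 0)) + ln (\<Sum>c'<k. E c' t))
      has_real_derivative (- (if a = c then Y i else 0) +
        (\<Sum>c'<k. if c' = c then E c' ?t0 * Y i else 0) / (\<Sum>c'<k. E c' ?t0))) (at ?t0)"
  proof (rule DERIV_add)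
    show "((\<lambda>t. - (dotp d (x a) Y + (if a = c then (t - ?t0) * Y i else 0)))
        has_real_derivative - (if a = c then Y i else 0)) (at ?t0)"
      by (cases "a = c") (auto intro!: derivative_eq_intros)
    show "((\<lambda>t. ln (\<Sum>c'<k. E c' t)) has_real_derivative
        (\<Sum>c'<k. if c' = c then E c' ?t0 * Y i else 0) / (\<Sum>c'<k. E c' ?t0)) (at ?t0)"
      using DERIV_chain2[OF DERIV_ln[OF S_pos] dS[of ?t0]] by (simp add: divide_inverse mult.commute)
  qed
  moreover have "- (if a = c then Y i else 0) +
      (\<Sum>c'<k. if c' = c then E c' ?t0 * Y i else 0) / (\<Sum>c'<k. E c' ?t0) = loss_grad k d x z c i"
    unfolding dS0 S0 loss_grad_def softmax_def z by (auto simp: algebra_simps)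
  ultimately show ?thesis unfolding eq by simp
qed

lemma has_real_derivative_loss_grad:
  assumes "c < k" "c' < k" "j < d"
  shows "((\<lambda>t. loss_grad k d (x(c' := (x c')(j := t))) z c i) has_real_derivative loss_hess k d x z c i c' j)
    (at (x c' j))"
proof -
  obtain a Y where z: "z = (a, Y)" by (cases z)
  let ?t0 = "x c' j"
  define E where "E b t = exp (dotp d (x b) Y + (if b = c' then (t - ?t0) * Y j else 0))" for b t
  have eq: "loss_grad k d (x(c' := (x c')(j := t))) z c i =
      Y i * (E c t / (\<Sum>b<k. E b t) - (if a = c then 1 else 0))" for t
    unfolding loss_grad_def softmax_def partition_sum_def z fst_conv snd_conv dotp_fun_upd[OF assms(3)] E_def ..
  have dE: "((\<lambda>t. E b t) has_real_derivative (if b = c' then E b t * Y j else 0)) (at t)" for b t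
    unfolding E_def by (auto intro!: derivative_eq_intros)
  have dS: "((\<lambda>t. \<Sum>b<k. E b t) has_real_derivative (\<Sum>b<k. if b = c' then E b t * Y j else 0)) (at t)" for t
    by (rule DERIV_sum) (rule dE)
  have E0: "E b ?t0 = exp (dotp d (x b) Y)" for b unfolding E_def by simp
  have S0: "(\<Sum>b<k. E b ?t0) = partition_sum k d x Y" unfolding E0 partition_sum_def ..
  then have S_pos: "(\<Sum>b<k. E b ?t0) > 0" using partition_sum_pos assms by auto
  have dS0: "(\<Sum>b<k. if b = c' then E b ?t0 * Y j else 0) = exp (dotp d (x c') Y) * Y j"
    using assms E0 by simp
  have "((\<lambda>t. Y i * (E c t / (\<Sum>b<k. E b t) - (if a = c then 1 else 0))) has_real_derivative
      Y i * (((if c = c' then E c ?t0 * Y j else 0) * (\<Sum>b<k. E b ?t0)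
               - E c ?t0 * (\<Sum>b<k. if b = c' then E b ?t0 * Y j else 0))
             / ((\<Sum>b<k. E b ?t0) * (\<Sum>b<k. E b ?t0)) - 0)) (at ?t0)"
    by (intro DERIV_cmult DERIV_diff DERIV_divide dE dS DERIV_const) (use S_pos in auto)
  moreover have "Y i * (((if c = c' then E c ?t0 * Y j else 0) * (\<Sum>b<k. E b ?t0)
               - E c ?t0 * (\<Sum>b<k. if b = c' then E b ?t0 * Y j else 0))
             / ((\<Sum>b<k. E b ?t0) * (\<Sum>b<k. E b ?t0)) - 0) = loss_hess k d x z c i c' j"
    unfolding dS0 S0 E0 loss_hess_def softmax_def z fst_conv snd_conv partition_sum_def[symmetric]
    using partition_sum_pos[of k d x Y] assms by (auto simp: field_simps)
  ultimately show ?thesis unfolding eq by simp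
qed

lemma pderiv_emp_risk:
  assumes "c < k" "i < d"
  shows "pderiv (emp_risk M k d w) x (c, i) = (1 / real M) * (\<Sum>l<M. loss_grad k d x (w l) c i)"
proof -
  have "((\<lambda>t. emp_risk M k d w (x(c := (x c)(i := t)))) has_real_derivative
      (1 / real M) * (\<Sum>l<M. loss_grad k d x (w l) c i)) (at (x c i))"
    unfolding emp_risk_def by (intro DERIV_cmult DERIV_sum has_real_derivative_loss assms)
  then show ?thesis unfolding pderiv_def by (simp add: DERIV_imp_deriv)
qed

lemma hess_emp_risk:
  assumes "r \<in> idx k d" "s \<in> idx k d"
  shows "hess (emp_risk M k d w) x r s =
     (1 / real M) * (\<Sum>l<M. loss_hess k d x (w l) (fst s) (snd s) (fst r) (snd r))"
proof -
  obtain c i where s: "s = (c, i)" "c < k" "i < d" using assms(2) unfolding idx_def by auto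
  obtain c' j where r: "r = (c', j)" "c' < k" "j < d" using assms(1) unfolding idx_def by auto
  have eq: "(\<lambda>x'. pderiv (emp_risk M k d w) x' s) = (\<lambda>x'. (1 / real M) * (\<Sum>l<M. loss_grad k d x' (w l) c i))"
    unfolding s(1) using pderiv_emp_risk[OF s(2,3)] by auto
  have "((\<lambda>t. (1 / real M) * (\<Sum>l<M. loss_grad k d (x(c' := (x c')(j := t))) (w l) c i)) has_real_derivative
      (1 / real M) * (\<Sum>l<M. loss_hess k d x (w l) c i c' j)) (at (x c' j))"
    by (intro DERIV_cmult DERIV_sum has_real_derivative_loss_grad s r)
  then have "pderiv (\<lambda>x'. (1 / real M) * (\<Sum>l<M. loss_grad k d x' (w l) c i)) x r =
      (1 / real M) * (\<Sum>l<M. loss_hess k d x (w l) c i c' j)"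
    unfolding pderiv_def r(1) fst_conv snd_conv by (rule DERIV_imp_deriv)
  then show ?thesis unfolding hess_def eq using r s by simp
qed

lemma grad_loss:
  assumes "r \<in> idx k d"
  shows "grad (\<lambda>x'. loss k d x' z) x r = loss_grad k d x z (fst r) (snd r)"
proof -
  obtain c i where r: "r = (c, i)" "c < k" "i < d" using assms unfolding idx_def by auto
  show ?thesis unfolding grad_def pderiv_def r(1)
    using has_real_derivative_loss[OF r(2,3), of x z] by (simp add: DERIV_imp_deriv)
qed

lemma emp_G_eq:
  assumes "r \<in> idx k d" "s \<in> idx k d"
  shows "emp_G M k d w x r s =
    (1 / real M) * (\<Sum>l<M. loss_grad k d x (w l) (fst r) (snd r) * loss_grad k d x (w l) (fst s) (snd s))"
  unfolding emp_G_def using grad_loss[OF assms(1)] grad_loss[OF assms(2)] by simp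

section \<open>Exponential moments of the per-sample bilinear forms\<close>

definition sample_hess ::
    "nat \<Rightarrow> nat \<Rightarrow> (nat \<Rightarrow> nat \<Rightarrow> real) \<Rightarrow> nat \<times> nat \<Rightarrow> nat \<times> nat \<Rightarrow> nat \<times> (nat \<Rightarrow> real) \<Rightarrow> real" where
  "sample_hess k d x r s z = loss_hess k d x z (fst s) (snd s) (fst r) (snd r)"

definition sample_grad_outer ::
    "nat \<Rightarrow> nat \<Rightarrow> (nat \<Rightarrow> nat \<Rightarrow> real) \<Rightarrow> nat \<times> nat \<Rightarrow> nat \<times> nat \<Rightarrow> nat \<times> (nat \<Rightarrow> real) \<Rightarrow> real" where
  "sample_grad_outer k d x r s z = loss_grad k d x z (fst r) (snd r) * loss_grad k d x z (fst s) (snd s)"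

definition softmax_jacobian :: "nat \<Rightarrow> nat \<Rightarrow> (nat \<Rightarrow> nat \<Rightarrow> real) \<Rightarrow> (nat \<Rightarrow> real) \<Rightarrow> nat \<Rightarrow> nat \<Rightarrow> real" where
  "softmax_jacobian k d x Y c c' =
     softmax k d x Y c * (if c = c' then 1 else 0) - softmax k d x Y c * softmax k d x Y c'"

definition block_dot :: "nat \<Rightarrow> (nat \<times> nat \<Rightarrow> real) \<Rightarrow> (nat \<Rightarrow> real) \<Rightarrow> nat \<Rightarrow> real" where
  "block_dot d u Y c = (\<Sum>i<d. u (c, i) * Y i)"

definition block_norm2 :: "nat \<Rightarrow> nat \<Rightarrow> (nat \<times> nat \<Rightarrow> real) \<Rightarrow> (nat \<Rightarrow> real) \<Rightarrow> real" where
  "block_norm2 k d u Y = (\<Sum>c<k. (block_dot d u Y c)\<^sup>2)"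

lemma sum_idx: "(\<Sum>r\<in>idx k d. f r) = (\<Sum>c<k. \<Sum>i<d. f (c, i))"
  unfolding idx_def by (simp add: sum.cartesian_product)

lemma bilin_sample_hess_eq_jacobian:
  "bilin (idx k d) (\<lambda>r s. sample_hess k d x r s z) u v =
     (\<Sum>c'<k. \<Sum>c<k. softmax_jacobian k d x (snd z) c c' * block_dot d u (snd z) c' * block_dot d v (snd z) c)"
proof -
  let ?Y = "snd z" and ?W = "softmax_jacobian k d x (snd z)"
  have inner: "matvec (idx k d) (\<lambda>r s. sample_hess k d x r s z) v r =
      (\<Sum>c<k. ?W c (fst r) * ?Y (snd r) * block_dot d v ?Y c)" for r
    unfolding matvec_def sum_idx sample_hess_def loss_hess_def softmax_jacobian_def[symmetric] block_dot_def
    by (intro sum.cong refl) (simp add: sum_distrib_left mult_ac)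
  have "bilin (idx k d) (\<lambda>r s. sample_hess k d x r s z) u v =
      (\<Sum>c'<k. \<Sum>j<d. \<Sum>c<k. ?W c c' * (u (c', j) * ?Y j) * block_dot d v ?Y c)"
    unfolding bilin_def inner sum_idx by (simp add: sum_distrib_left mult_ac)
  also have "\<dots> = (\<Sum>c'<k. \<Sum>c<k. \<Sum>j<d. ?W c c' * (u (c', j) * ?Y j) * block_dot d v ?Y c)"
    by (rule sum.cong[OF refl], rule sum.swap)
  also have "\<dots> = (\<Sum>c'<k. \<Sum>c<k. ?W c c' * block_dot d u ?Y c' * block_dot d v ?Y c)"
    unfolding block_dot_def by (simp add: sum_distrib_left sum_distrib_right mult_ac)
  finally show ?thesis .
qed

lemma bilin_sample_hess:
  fixes k d :: nat and x :: "nat \<Rightarrow> nat \<Rightarrow> real" and z :: "nat \<times> (nat \<Rightarrow> real)"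
    and u v :: "nat \<times> nat \<Rightarrow> real"
  defines "\<sigma> \<equiv> softmax k d x (snd z)" and "a \<equiv> block_dot d u (snd z)" and "b \<equiv> block_dot d v (snd z)"
  shows "bilin (idx k d) (\<lambda>r s. sample_hess k d x r s z) u v =
    (\<Sum>c<k. \<sigma> c * a c * b c) - (\<Sum>c<k. \<sigma> c * a c) * (\<Sum>c<k. \<sigma> c * b c)"
proof -
  have "(\<Sum>c<k. softmax_jacobian k d x (snd z) c c' * a c' * b c) =
      \<sigma> c' * a c' * b c' - \<sigma> c' * a c' * (\<Sum>c<k. \<sigma> c * b c)" if "c' < k" for c'
  proof -
    have "(\<Sum>c<k. softmax_jacobian k d x (snd z) c c' * a c' * b c) =
        (\<Sum>c<k. (if c = c' then \<sigma> c * a c' * b c else 0)) - (\<Sum>c<k. \<sigma> c' * a c' * (\<sigma> c * b c))"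
      unfolding sum_subtractf[symmetric] softmax_jacobian_def \<sigma>_def
      by (intro sum.cong refl) (simp add: algebra_simps)
    also have "\<dots> = \<sigma> c' * a c' * b c' - \<sigma> c' * a c' * (\<Sum>c<k. \<sigma> c * b c)"
      using that by (simp add: sum_distrib_left)
    finally show ?thesis .
  qed
  then have "bilin (idx k d) (\<lambda>r s. sample_hess k d x r s z) u v =
      (\<Sum>c'<k. \<sigma> c' * a c' * b c' - \<sigma> c' * a c' * (\<Sum>c<k. \<sigma> c * b c))"
    unfolding bilin_sample_hess_eq_jacobian a_def[symmetric] b_def[symmetric] by simp
  then show ?thesis by (simp add: sum_subtractf sum_distrib_right)
qed

lemma bilin_sample_grad_outer:
  fixes k d :: nat and x :: "nat \<Rightarrow> nat \<Rightarrow> real" and z :: "nat \<times> (nat \<Rightarrow> real)"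
  defines "e \<equiv> \<lambda>c. softmax k d x (snd z) c - (if fst z = c then 1 else 0)"
  shows "bilin (idx k d) (\<lambda>r s. sample_grad_outer k d x r s z) u v =
     (\<Sum>c<k. e c * block_dot d u (snd z) c) * (\<Sum>c<k. e c * block_dot d v (snd z) c)"
proof -
  have g: "(\<Sum>r\<in>idx k d. w r * loss_grad k d x z (fst r) (snd r)) = (\<Sum>c<k. e c * block_dot d w (snd z) c)" for w
    unfolding sum_idx loss_grad_def block_dot_def e_def by (simp add: sum_distrib_left sum_distrib_right mult_ac)
  have "bilin (idx k d) (\<lambda>r s. sample_grad_outer k d x r s z) u v =
      (\<Sum>r\<in>idx k d. u r * loss_grad k d x z (fst r) (snd r)) *
      (\<Sum>s\<in>idx k d. v s * loss_grad k d x z (fst s) (snd s))"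
  proof -
    have "bilin (idx k d) (\<lambda>r s. sample_grad_outer k d x r s z) u v =
        (\<Sum>r\<in>idx k d. u r * loss_grad k d x z (fst r) (snd r) *
          (\<Sum>s\<in>idx k d. v s * loss_grad k d x z (fst s) (snd s)))"
      unfolding bilin_def matvec_def sample_grad_outer_def
      by (intro sum.cong refl) (simp add: sum_distrib_left mult_ac)
    then show ?thesis by (simp add: sum_distrib_right)
  qed
  then show ?thesis unfolding g .
qed

lemma abs_mult_le_half_sum_squares: "\<bar>a * b\<bar> \<le> (a\<^sup>2 + b\<^sup>2) / 2" for a b :: real
  using zero_le_power2[of "\<bar>a\<bar> - \<bar>b\<bar>"] by (simp add: power2_eq_square algebra_simps abs_mult)

lemma power2_convex_combination_le:
  fixes s a :: "nat \<Rightarrow> real"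
  assumes s0: "\<And>c. 0 \<le> s c" and s1: "(\<Sum>c<k. s c) = 1"
  shows "(\<Sum>c<k. s c * a c)\<^sup>2 \<le> (\<Sum>c<k. (a c)\<^sup>2)"
proof -
  have "(\<Sum>c<k. s c * a c)\<^sup>2 = (\<Sum>c<k. sqrt (s c) * (sqrt (s c) * a c))\<^sup>2"
    using s0 by (simp add: mult.assoc[symmetric])
  also have "\<dots> \<le> (\<Sum>c<k. (sqrt (s c))\<^sup>2) * (\<Sum>c<k. (sqrt (s c) * a c)\<^sup>2)"
    by (rule Cauchy_Schwarz_ineq_sum)
  also have "\<dots> = (\<Sum>c<k. s c * (a c)\<^sup>2)" using s0 s1 by (simp add: power_mult_distrib)
  also have "\<dots> \<le> (\<Sum>c<k. (a c)\<^sup>2)"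
  proof (rule sum_mono)
    fix c assume "c \<in> {..<k}"
    then have "s c \<le> 1"
      using member_le_sum[of c "{..<k}" s] s0 s1 by simp
    then show "s c * (a c)\<^sup>2 \<le> (a c)\<^sup>2" using mult_right_mono[of "s c" 1 "(a c)\<^sup>2"] by simp
  qed
  finally show ?thesis .
qed

lemma power2_sum_mult_le_card:
  fixes e a :: "nat \<Rightarrow> real"
  assumes "\<And>c. c < k \<Longrightarrow> \<bar>e c\<bar> \<le> 1"
  shows "(\<Sum>c<k. e c * a c)\<^sup>2 \<le> real k * (\<Sum>c<k. (a c)\<^sup>2)"
proof -
  have "(\<Sum>c<k. (e c)\<^sup>2) \<le> (\<Sum>c<k. 1)"
  proof (rule sum_mono)
    fix c assume "c \<in> {..<k}"
    then have "\<bar>e c\<bar>\<^sup>2 \<le> 1\<^sup>2" using assms by (intro power_mono) auto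
    then show "(e c)\<^sup>2 \<le> 1" by simp
  qed
  then have "(\<Sum>c<k. (e c)\<^sup>2) * (\<Sum>c<k. (a c)\<^sup>2) \<le> real k * (\<Sum>c<k. (a c)\<^sup>2)"
    by (intro mult_right_mono) (auto simp: sum_nonneg)
  then show ?thesis using Cauchy_Schwarz_ineq_sum[of e a "{..<k}"] by linarith
qed

lemma abs_bilin_sample_hess_le:
  assumes "k > 0"
  shows "\<bar>bilin (idx k d) (\<lambda>r s. sample_hess k d x r s z) u v\<bar> \<le>
     block_norm2 k d u (snd z) + block_norm2 k d v (snd z)"
proof -
  let ?s = "softmax k d x (snd z)" and ?a = "block_dot d u (snd z)" and ?b = "block_dot d v (snd z)"
  have "\<bar>\<Sum>c<k. ?s c * ?a c * ?b c\<bar> \<le> (\<Sum>c<k. ((?a c)\<^sup>2 + (?b c)\<^sup>2) / 2)"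
  proof (rule order_trans[OF sum_abs sum_mono])
    fix c assume "c \<in> {..<k}"
    then have "\<bar>?s c * ?a c * ?b c\<bar> \<le> 1 * \<bar>?a c * ?b c\<bar>"
      using softmax_le_one[OF assms] softmax_nonneg
      by (simp only: abs_mult mult.assoc) (intro mult_right_mono, auto)
    then show "\<bar>?s c * ?a c * ?b c\<bar> \<le> ((?a c)\<^sup>2 + (?b c)\<^sup>2) / 2"
      using abs_mult_le_half_sum_squares[of "?a c" "?b c"] by simp
  qed
  also have "\<dots> = (block_norm2 k d u (snd z) + block_norm2 k d v (snd z)) / 2"
    unfolding block_norm2_def by (simp add: sum_divide_distrib[symmetric] sum.distrib)
  finally have t1: "\<bar>\<Sum>c<k. ?s c * ?a c * ?b c\<bar> \<le>
      (block_norm2 k d u (snd z) + block_norm2 k d v (snd z)) / 2" .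
  have "\<bar>(\<Sum>c<k. ?s c * ?a c) * (\<Sum>c<k. ?s c * ?b c)\<bar> \<le>
      ((\<Sum>c<k. ?s c * ?a c)\<^sup>2 + (\<Sum>c<k. ?s c * ?b c)\<^sup>2) / 2"
    by (rule abs_mult_le_half_sum_squares)
  also have "\<dots> \<le> (block_norm2 k d u (snd z) + block_norm2 k d v (snd z)) / 2"
    unfolding block_norm2_def
    using power2_convex_combination_le[of ?s k, OF softmax_nonneg sum_softmax[OF assms]]
    by (intro divide_right_mono add_mono) auto
  finally have t2: "\<bar>(\<Sum>c<k. ?s c * ?a c) * (\<Sum>c<k. ?s c * ?b c)\<bar> \<le>
      (block_norm2 k d u (snd z) + block_norm2 k d v (snd z)) / 2" .
  show ?thesis unfolding bilin_sample_hess
    using order_trans[OF abs_triangle_ineq4 add_mono[OF t1 t2]] by simp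
qed

lemma abs_bilin_sample_grad_outer_le:
  assumes "k > 0"
  shows "\<bar>bilin (idx k d) (\<lambda>r s. sample_grad_outer k d x r s z) u v\<bar> \<le>
     real k * (block_norm2 k d u (snd z) + block_norm2 k d v (snd z))"
proof -
  let ?e = "\<lambda>c. softmax k d x (snd z) c - (if fst z = c then 1 else 0)"
  have e: "\<bar>?e c\<bar> \<le> 1" if "c < k" for c
    using softmax_le_one[OF assms that, of d x "snd z"] softmax_nonneg[of k d x "snd z" c] by auto
  let ?X = "\<Sum>c<k. ?e c * block_dot d u (snd z) c" and ?Y = "\<Sum>c<k. ?e c * block_dot d v (snd z) c"
  have "\<bar>?X * ?Y\<bar> \<le> (?X\<^sup>2 + ?Y\<^sup>2) / 2" by (rule abs_mult_le_half_sum_squares)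
  also have "\<dots> \<le> (real k * block_norm2 k d u (snd z) + real k * block_norm2 k d v (snd z)) / 2"
    unfolding block_norm2_def using power2_sum_mult_le_card[of k ?e, OF e]
    by (intro divide_right_mono add_mono) auto
  also have "\<dots> \<le> real k * (block_norm2 k d u (snd z) + block_norm2 k d v (snd z))"
    by (simp add: field_simps block_norm2_def sum_nonneg)
  finally show ?thesis unfolding bilin_sample_grad_outer .
qed

lemma exp_block_norm2_le:
  assumes "k > 0"
  shows "exp (block_norm2 k d u Y / (32 * real k)) \<le> (\<Sum>c<k. exp ((block_dot d u Y c)\<^sup>2 / 32))"
proof -
  let ?f = "\<lambda>c. (block_dot d u Y c)\<^sup>2"
  obtain c0 where c0: "c0 < k" "\<forall>c<k. ?f c \<le> ?f c0"
  proof -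
    have "Max (?f ` {..<k}) \<in> ?f ` {..<k}" using assms by (intro Max_in) auto
    then obtain c0 where "c0 < k" "?f c0 = Max (?f ` {..<k})" by auto
    then show ?thesis using that by auto
  qed
  have "block_norm2 k d u Y \<le> (\<Sum>c<k. ?f c0)"
    unfolding block_norm2_def by (rule sum_mono) (use c0 in auto)
  then have "block_norm2 k d u Y / (32 * real k) \<le> ?f c0 / 32"
    using assms by (simp add: field_simps)
  then have "exp (block_norm2 k d u Y / (32 * real k)) \<le> exp (?f c0 / 32)" by simp
  also have "\<dots> \<le> (\<Sum>c<k. exp (?f c / 32))" by (rule member_le_sum) (use c0 in auto)
  finally show ?thesis .
qed

lemma sum_power2_block_le:
  fixes u :: "nat \<times> nat \<Rightarrow> real"
  assumes "(\<Sum>r\<in>idx k d. (u r)\<^sup>2) \<le> 4" "c < k"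
  shows "(\<Sum>i<d. (u (c, i))\<^sup>2) \<le> 4"
proof -
  have "(\<Sum>i<d. (u (c, i))\<^sup>2) \<le> (\<Sum>c'<k. \<Sum>i<d. (u (c', i))\<^sup>2)"
    by (rule member_le_sum[of c "{..<k}" "\<lambda>c'. \<Sum>i<d. (u (c', i))\<^sup>2"]) (use assms(2) in \<open>auto intro: sum_nonneg\<close>)
  then show ?thesis using assms(1) by (simp add: sum_idx)
qed

lemma abs_sum_mult_le_two:
  fixes w m :: "nat \<Rightarrow> real"
  assumes "(\<Sum>i<d. (w i)\<^sup>2) \<le> 4" "(\<Sum>i<d. (m i)\<^sup>2) = 1"
  shows "\<bar>\<Sum>i<d. w i * m i\<bar> \<le> 2"
proof -
  have "\<bar>\<Sum>i<d. w i * m i\<bar>\<^sup>2 \<le> (\<Sum>i<d. (w i)\<^sup>2) * (\<Sum>i<d. (m i)\<^sup>2)"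
    using Cauchy_Schwarz_ineq_sum by simp
  also have "\<dots> \<le> 2\<^sup>2" using assms by simp
  finally show ?thesis by (rule power2_le_imp_le) simp
qed

lemma nn_integral_exp_block_dot_square_le:
  assumes p: "\<forall>a<k. 0 \<le> p a" "(\<Sum>a<k. p a) = 1" and lam: "lam \<ge> 1"
    and mu: "\<forall>a<k. (\<Sum>i<d. (mu a i)\<^sup>2) = 1"
    and u: "(\<Sum>r\<in>idx k d. (u r)\<^sup>2) \<le> 4" and c: "c < k"
  shows "(\<integral>\<^sup>+ z. ennreal (exp ((block_dot d u (snd z) c)\<^sup>2 / 32)) \<partial>data_dist k d p mu lam) \<le> 4"
  unfolding block_dot_def
  by (rule nn_integral_data_dist_exp_square[OF p lam])
     (use sum_power2_block_le[OF u c] abs_sum_mult_le_two[OF sum_power2_block_le[OF u c]] mu in auto)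

lemma exp_abs_le_sum_exp_block_dot:
  assumes "k > 0" and F: "\<bar>F\<bar> \<le> real k * (block_norm2 k d u Y + block_norm2 k d v Y)"
  shows "exp (1 / (64 * (real k)\<^sup>2) * \<bar>F\<bar>) \<le>
    (\<Sum>c<k. exp ((block_dot d u Y c)\<^sup>2 / 32)) + (\<Sum>c<k. exp ((block_dot d v Y c)\<^sup>2 / 32))"
proof -
  let ?A = "block_norm2 k d u Y / (64 * real k)" and ?B = "block_norm2 k d v Y / (64 * real k)"
  have "1 / (64 * (real k)\<^sup>2) * \<bar>F\<bar> \<le> 1 / (64 * (real k)\<^sup>2) * (real k * (block_norm2 k d u Y + block_norm2 k d v Y))"
    using F by (intro mult_left_mono) auto
  also have "\<dots> = ?A + ?B" using assms(1) by (simp add: field_simps power2_eq_square)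
  finally have "exp (1 / (64 * (real k)\<^sup>2) * \<bar>F\<bar>) \<le> exp ?A * exp ?B" by (simp add: exp_add[symmetric])
  also have "\<dots> \<le> ((exp ?A)\<^sup>2 + (exp ?B)\<^sup>2) / 2"
    using abs_mult_le_half_sum_squares[of "exp ?A" "exp ?B"] by simp
  also have "\<dots> = (exp (block_norm2 k d u Y / (32 * real k)) + exp (block_norm2 k d v Y / (32 * real k))) / 2"
    by (simp add: power2_eq_square exp_add[symmetric])
  also have "\<dots> \<le> (\<Sum>c<k. exp ((block_dot d u Y c)\<^sup>2 / 32)) + (\<Sum>c<k. exp ((block_dot d v Y c)\<^sup>2 / 32))"
    using exp_block_norm2_le[OF assms(1), of d u Y] exp_block_norm2_le[OF assms(1), of d v Y]
      sum_nonneg[of "{..<k}" "\<lambda>c. exp ((block_dot d u Y c)\<^sup>2 / 32)"]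
      sum_nonneg[of "{..<k}" "\<lambda>c. exp ((block_dot d v Y c)\<^sup>2 / 32)"]
    by simp
  finally show ?thesis .
qed

text \<open>The constants 1/(64 k^2) and 8 k depend neither on d nor on lambda; this is where the
  constants of the theorem become independent of lambda.\<close>

lemma nn_integral_exp_abs_le:
  assumes k: "k > 0" and p: "\<forall>a<k. 0 \<le> p a" "(\<Sum>a<k. p a) = 1" and lam: "lam \<ge> 1"
    and mu: "\<forall>a<k. (\<Sum>i<d. (mu a i)\<^sup>2) = 1"
    and u: "(\<Sum>r\<in>idx k d. (u r)\<^sup>2) \<le> 4" and v: "(\<Sum>r\<in>idx k d. (v r)\<^sup>2) \<le> 4"
    and F: "\<And>z. \<bar>F z\<bar> \<le> real k * (block_norm2 k d u (snd z) + block_norm2 k d v (snd z))"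
  shows "(\<integral>\<^sup>+ z. ennreal (exp (1 / (64 * (real k)\<^sup>2) * \<bar>F z\<bar>)) \<partial>data_dist k d p mu lam) \<le> ennreal (8 * real k)"
proof -
  let ?D = "data_dist k d p mu lam"
  let ?e = "\<lambda>u z c. ennreal (exp ((block_dot d u (snd z) c)\<^sup>2 / 32))"
  have [measurable]: "(\<lambda>z. exp ((block_dot d w (snd z) c)\<^sup>2 / 32)) \<in> borel_measurable ?D" for w c
    by (rule measurable_data_dist) (unfold block_dot_def, measurable)
  have "(\<integral>\<^sup>+ z. ennreal (exp (1 / (64 * (real k)\<^sup>2) * \<bar>F z\<bar>)) \<partial>?D) \<le>
      (\<integral>\<^sup>+ z. ((\<Sum>c<k. ?e u z c) + (\<Sum>c<k. ?e v z c)) \<partial>?D)"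
    using exp_abs_le_sum_exp_block_dot[OF k F]
    by (intro nn_integral_mono) (simp add: ennreal_plus[symmetric] sum_ennreal sum_nonneg ennreal_leI
        del: ennreal_plus)
  also have "\<dots> = (\<integral>\<^sup>+ z. (\<Sum>c<k. ?e u z c) \<partial>?D) + (\<integral>\<^sup>+ z. (\<Sum>c<k. ?e v z c) \<partial>?D)"
    by (rule nn_integral_add) measurable
  also have "\<dots> = (\<Sum>c<k. \<integral>\<^sup>+ z. ?e u z c \<partial>?D) + (\<Sum>c<k. \<integral>\<^sup>+ z. ?e v z c \<partial>?D)"
    by (subst (1 2) nn_integral_sum) auto
  also have "\<dots> \<le> (\<Sum>c<k. 4) + (\<Sum>c<k. 4)"
    by (intro add_mono sum_mono nn_integral_exp_block_dot_square_le[OF p lam mu u]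
        nn_integral_exp_block_dot_square_le[OF p lam mu v]) auto
  also have "\<dots> = ennreal (8 * real k)"
  proof -
    have "ennreal (8 * real k) = ennreal (real k * 4) + ennreal (real k * 4)"
      by (subst ennreal_plus[symmetric]) auto
    then show ?thesis by (simp add: ennreal_of_nat_eq_real_of_nat ennreal_mult)
  qed
  finally show ?thesis .
qed

section \<open>Concentration of empirical random matrices\<close>

lemma
  fixes g :: "'a \<Rightarrow> real"
  assumes "prob_space D" and g: "g \<in> borel_measurable D" and "l < M"
  shows integral_PiM_component: "(\<integral>w. g (w l) \<partial>(\<Pi>\<^sub>M l\<in>{..<M}. D)) = (\<integral>z. g z \<partial>D)"
    and integrable_PiM_component: "integrable D g \<Longrightarrow> integrable (\<Pi>\<^sub>M l\<in>{..<M}. D) (\<lambda>w. g (w l))"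
proof -
  have distr: "distr (\<Pi>\<^sub>M l\<in>{..<M}. D) D (\<lambda>w. w l) = D"
    by (rule distr_PiM_component) (use assms in auto)
  have meas: "(\<lambda>w. w l) \<in> measurable (\<Pi>\<^sub>M l\<in>{..<M}. D) D"
    using measurable_component_singleton[of l "{..<M}" "\<lambda>_. D"] \<open>l < M\<close> by simp
  show "(\<integral>w. g (w l) \<partial>(\<Pi>\<^sub>M l\<in>{..<M}. D)) = (\<integral>z. g z \<partial>D)"
    using integral_distr[OF meas g] distr by simp
  show "integrable D g \<Longrightarrow> integrable (\<Pi>\<^sub>M l\<in>{..<M}. D) (\<lambda>w. g (w l))"
    using integrable_distr_eq[OF meas g] distr by simp
qed

lemma integral_empirical_mean:
  fixes g :: "'a \<Rightarrow> real"
  assumes D: "prob_space D" and g: "g \<in> borel_measurable D" "integrable D g" and "M \<ge> 1"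
  shows "(\<integral>w. (1 / real M) * (\<Sum>l<M. g (w l)) \<partial>(\<Pi>\<^sub>M l\<in>{..<M}. D)) = (\<integral>z. g z \<partial>D)"
proof -
  have "(\<integral>w. (\<Sum>l<M. g (w l)) \<partial>(\<Pi>\<^sub>M l\<in>{..<M}. D)) = (\<Sum>l<M. \<integral>w. g (w l) \<partial>(\<Pi>\<^sub>M l\<in>{..<M}. D))"
    by (rule Bochner_Integration.integral_sum) (use integrable_PiM_component[OF D g(1) _ g(2)] in auto)
  also have "\<dots> = (\<Sum>l<M. \<integral>z. g z \<partial>D)"
    by (intro sum.cong refl integral_PiM_component[OF D g(1)]) simp
  also have "\<dots> = real M * (\<integral>z. g z \<partial>D)" by simp
  finally show ?thesis using \<open>M \<ge> 1\<close> by simp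
qed

lemma bilin_indicator:
  assumes "finite I" "r \<in> I" "s \<in> I"
  shows "bilin I A (\<lambda>r'. if r' = r then 1 else 0) (\<lambda>s'. if s' = s then 1 else 0) = A r s"
proof -
  have "(if P then 1 else 0) * (x::real) = (if P then x else 0)"
    "x * (if P then 1 else 0) = (if P then x else 0)" for P x by auto
  then show ?thesis unfolding bilin_def matvec_def using assms by simp
qed

lemma bilin_empirical_deviation:
  assumes "finite I" and int: "\<And>r s. r \<in> I \<Longrightarrow> s \<in> I \<Longrightarrow> integrable D (H r s)"
  shows "bilin I (\<lambda>r s. (\<Sum>l<M. H r s (w l)) / real M - (\<integral>z. H r s z \<partial>D)) u v =
    (\<Sum>l<M. bilin I (\<lambda>r s. H r s (w l)) u v) / real M - (\<integral>z. bilin I (\<lambda>r s. H r s z) u v \<partial>D)"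
proof -
  have "(\<integral>z. bilin I (\<lambda>r s. H r s z) u v \<partial>D) = (\<Sum>r\<in>I. u r * (\<Sum>s\<in>I. (\<integral>z. H r s z \<partial>D) * v s))"
    unfolding bilin_def matvec_def using int by (simp add: integrable_sum)
  moreover have "(\<Sum>l<M. bilin I (\<lambda>r s. H r s (w l)) u v) =
      (\<Sum>r\<in>I. u r * (\<Sum>s\<in>I. (\<Sum>l<M. H r s (w l)) * v s))"
    unfolding bilin_def matvec_def
    by (subst sum.swap) (simp add: sum_distrib_left sum_distrib_right mult_ac sum.swap[of _ "{..<M}"])
  ultimately show ?thesis
    unfolding bilin_def matvec_def
    by (simp add: left_diff_distrib right_diff_distrib sum_subtractf sum_divide_distrib
        sum_distrib_left mult_ac)
qed

lemma opnorm_gt_subset_net_events: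
  assumes "finite I" "I \<noteq> {}"
  shows "{w \<in> S. t < opnorm I (A w)} \<subseteq>
    (\<Union>(u, v)\<in>sphere_net I \<times> sphere_net I. {w \<in> S. t/3 < \<bar>bilin I (A w) u v\<bar>})"
proof safe
  fix w assume "w \<in> S" "t < opnorm I (A w)"
  moreover have "opnorm I (A w) \<le> 3 * (t/3)"
    if "\<forall>(u, v)\<in>sphere_net I \<times> sphere_net I. \<bar>bilin I (A w) u v\<bar> \<le> t/3"
    using that by (intro opnorm_le_three_net[OF assms]) auto
  ultimately show "w \<in> (\<Union>(u, v)\<in>sphere_net I \<times> sphere_net I. {w \<in> S. t/3 < \<bar>bilin I (A w) u v\<bar>})"
    by force
qed

lemma opnorm_empirical_deviation_tail:
  fixes D :: "'a measure" and I :: "'i set" and H :: "'i \<Rightarrow> 'i \<Rightarrow> 'a \<Rightarrow> real"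
  assumes D: "prob_space D" and I: "finite I" "I \<noteq> {}"
    and H_meas[measurable]: "\<And>r s. H r s \<in> borel_measurable D"
    and mom: "\<And>u v. (\<Sum>r\<in>I. (u r)\<^sup>2) \<le> 4 \<Longrightarrow> (\<Sum>r\<in>I. (v r)\<^sup>2) \<le> 4 \<Longrightarrow>
        (\<integral>\<^sup>+z. ennreal (exp (\<eta> * \<bar>bilin I (\<lambda>r s. H r s z) u v\<bar>)) \<partial>D) \<le> ennreal K"
    and \<eta>: "\<eta> > 0" and K: "K \<ge> 1" and M: "M \<ge> 1" and t: "t > 0"
  shows "measure (\<Pi>\<^sub>M l\<in>{..<M}. D) {w \<in> space (\<Pi>\<^sub>M l\<in>{..<M}. D).
      t < opnorm I (\<lambda>r s. (1 / real M) * (\<Sum>l<M. H r s (w l))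
            - (\<integral>w'. (1 / real M) * (\<Sum>l<M. H r s (w' l)) \<partial>(\<Pi>\<^sub>M l\<in>{..<M}. D)))}
    \<le> (real (card (sphere_net I)))\<^sup>2 * (2 * exp (- (real M * chernoff_rate \<eta> K * min (t/3) ((t/3)\<^sup>2))))"
proof -
  let ?\<Omega> = "\<Pi>\<^sub>M l\<in>{..<M}. D"
  let ?B = "\<lambda>u v z. bilin I (\<lambda>r s. H r s z) u v"
  let ?E = "\<lambda>(u, v). {w \<in> space ?\<Omega>. t/3 < \<bar>(\<Sum>l<M. ?B u v (w l)) / real M - (\<integral>z. ?B u v z \<partial>D)\<bar>}"
  interpret \<Omega>: prob_space ?\<Omega> by (rule prob_space_PiM) (use D in auto)
  have [measurable]: "?B u v \<in> borel_measurable D" for u v unfolding bilin_def matvec_def by measurable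
  have int: "integrable D (H r s)" if "r \<in> I" "s \<in> I" for r s
    using prob_space.exp_moment_integrable(3)[OF D _ \<eta> mom, of "\<lambda>r'. if r' = r then 1 else 0" "\<lambda>s'. if s' = s then 1 else 0"]
      sum_power2_indicator[OF I(1)] bilin_indicator[OF I(1) that] K that
    by simp
  have "{w \<in> space ?\<Omega>. t < opnorm I (\<lambda>r s. (1 / real M) * (\<Sum>l<M. H r s (w l))
            - (\<integral>w'. (1 / real M) * (\<Sum>l<M. H r s (w' l)) \<partial>?\<Omega>))}
      = {w \<in> space ?\<Omega>. t < opnorm I (\<lambda>r s. (1 / real M) * (\<Sum>l<M. H r s (w l)) - (\<integral>z. H r s z \<partial>D))}"
  proof -
    have "opnorm I (\<lambda>r s. (1 / real M) * (\<Sum>l<M. H r s (w l))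
            - (\<integral>w'. (1 / real M) * (\<Sum>l<M. H r s (w' l)) \<partial>?\<Omega>)) =
        opnorm I (\<lambda>r s. (1 / real M) * (\<Sum>l<M. H r s (w l)) - (\<integral>z. H r s z \<partial>D))" for w
      by (rule opnorm_cong) (subst integral_empirical_mean[OF D H_meas int M], auto)
    then show ?thesis by simp
  qed
  also have "\<dots> \<subseteq> (\<Union>p\<in>sphere_net I \<times> sphere_net I. ?E p)"
    using opnorm_gt_subset_net_events[OF I, of "space ?\<Omega>" t
        "\<lambda>w r s. (\<Sum>l<M. H r s (w l)) / real M - (\<integral>z. H r s z \<partial>D)"]
    by (simp add: bilin_empirical_deviation[OF I(1) int])
  finally have subset: "{w \<in> space ?\<Omega>. t < opnorm I (\<lambda>r s. (1 / real M) * (\<Sum>l<M. H r s (w l))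
            - (\<integral>w'. (1 / real M) * (\<Sum>l<M. H r s (w' l)) \<partial>?\<Omega>))} \<subseteq> \<dots>" .
  have net: "finite (sphere_net I \<times> sphere_net I)" using finite_card_sphere_net[OF I] by auto
  have E: "?E p \<in> sets ?\<Omega>" for p by (cases p) (simp only: case_prod_conv, measurable)
  have "measure ?\<Omega> (\<Union>p\<in>sphere_net I \<times> sphere_net I. ?E p) \<le> (\<Sum>p\<in>sphere_net I \<times> sphere_net I. measure ?\<Omega> (?E p))"
    by (rule \<Omega>.finite_measure_subadditive_finite) (use net E in auto)
  also have "\<dots> \<le> (\<Sum>p\<in>sphere_net I \<times> sphere_net I. 2 * exp (- (real M * chernoff_rate \<eta> K * min (t/3) ((t/3)\<^sup>2))))"
  proof (rule sum_mono)
    fix p assume "p \<in> sphere_net I \<times> sphere_net I"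
    then obtain u v where p: "p = (u, v)" "u \<in> sphere_net I" "v \<in> sphere_net I" by auto
    show "measure ?\<Omega> (?E p) \<le> 2 * exp (- (real M * chernoff_rate \<eta> K * min (t/3) ((t/3)\<^sup>2)))"
      unfolding p(1) case_prod_conv using mom sum_power2_sphere_net_le[OF I] p(2,3) t
      by (intro empirical_mean_tail[OF D _ \<eta> _ K M]) auto
  qed
  also have "\<dots> = (real (card (sphere_net I)))\<^sup>2 * (2 * exp (- (real M * chernoff_rate \<eta> K * min (t/3) ((t/3)\<^sup>2))))"
    by (simp add: card_cartesian_product power2_eq_square)
  finally show ?thesis
    using \<Omega>.finite_measure_mono[OF subset] net E by (meson order_trans sets.finite_UN)
qed

lemma union_bound_exponent_le:
  fixes N k d M :: nat and \<rho> t :: real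
  assumes N: "N \<le> 3 ^ (6 * (k * d))" and d: "d \<ge> 1" and \<rho>: "\<rho> > 0" and t: "t > 0"
  shows "(real N)\<^sup>2 * (2 * exp (- (real M * \<rho> * min (t/3) ((t/3)\<^sup>2))))
     \<le> exp (- ((\<rho> / 9) * (real M / real d) * min t (t\<^sup>2) - (12 * real k * ln 3 + 1)) * real d)"
proof -
  have "(real N)\<^sup>2 \<le> ((3::real) ^ (6 * (k * d)))\<^sup>2"
    using N by (intro power_mono) (simp_all add: of_nat_le_iff[symmetric])
  also have "(3::real) ^ (6 * (k * d)) = exp (real (6 * (k * d)) * ln 3)"
    using exp_of_nat_mult[of "6 * (k * d)" "ln (3::real)"] by simp
  also have "(exp (real (6 * (k * d)) * ln 3))\<^sup>2 = exp (12 * real k * ln 3 * real d)"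
    by (simp add: power2_eq_square exp_add[symmetric] algebra_simps)
  finally have N2: "(real N)\<^sup>2 \<le> exp (12 * real k * ln 3 * real d)" .
  have two: "2 \<le> exp (real d)"
    using exp_ge_add_one_self[of "real d"] d by linarith
  have "min t (t\<^sup>2) / 9 \<le> min (t/3) ((t/3)\<^sup>2)"
    using t by (auto simp: min_def power2_eq_square field_simps)
  then have "real M * \<rho> * (min t (t\<^sup>2) / 9) \<le> real M * \<rho> * min (t/3) ((t/3)\<^sup>2)"
    using \<rho> by (intro mult_left_mono) auto
  then have e: "exp (- (real M * \<rho> * min (t/3) ((t/3)\<^sup>2))) \<le> exp (- (\<rho> / 9 * real M * min t (t\<^sup>2)))"
    by (simp add: field_simps)
  have "(real N)\<^sup>2 * (2 * exp (- (real M * \<rho> * min (t/3) ((t/3)\<^sup>2))))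
      \<le> exp (12 * real k * ln 3 * real d) * (exp (real d) * exp (- (\<rho> / 9 * real M * min t (t\<^sup>2))))"
    using N2 two e by (intro mult_mono) auto
  also have "\<dots> = exp (- ((\<rho> / 9) * (real M / real d) * min t (t\<^sup>2) - (12 * real k * ln 3 + 1)) * real d)"
    using d by (simp add: exp_add[symmetric] field_simps)
  finally show ?thesis .
qed

definition rate_const :: "nat \<Rightarrow> real" where
  "rate_const k = chernoff_rate (1 / (64 * (real k)\<^sup>2)) (8 * real k) / 9"

lemma rate_const_pos: "k > 0 \<Longrightarrow> rate_const k > 0"
  unfolding rate_const_def chernoff_rate_def mgf_const_def by (simp add: field_simps)

lemma measurable_sample_hess: "sample_hess k d x r s \<in> borel_measurable (count_space UNIV \<Otimes>\<^sub>M lborel_vec d)"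
  by (rule measurable_pair_count_space_nat)
     (unfold sample_hess_def loss_hess_def softmax_def partition_sum_def dotp_def fst_conv snd_conv, measurable)

lemma measurable_sample_grad_outer:
  "sample_grad_outer k d x r s \<in> borel_measurable (count_space UNIV \<Otimes>\<^sub>M lborel_vec d)"
  by (rule measurable_pair_count_space_nat)
     (unfold sample_grad_outer_def loss_grad_def softmax_def partition_sum_def dotp_def fst_conv snd_conv,
      measurable)


lemma empirical_matrix_tail:
  fixes X :: "(nat \<Rightarrow> nat \<times> (nat \<Rightarrow> real)) \<Rightarrow> nat \<times> nat \<Rightarrow> nat \<times> nat \<Rightarrow> real"
    and H :: "nat \<times> nat \<Rightarrow> nat \<times> nat \<Rightarrow> nat \<times> (nat \<Rightarrow> real) \<Rightarrow> real"
  assumes k: "k > 0" and d: "d \<ge> 1" and M: "M \<ge> 1"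
    and p: "\<forall>a<k. 0 \<le> p a" "(\<Sum>a<k. p a) = 1"
    and mu: "\<forall>a<k. (\<Sum>i<d. (mu a i)\<^sup>2) = 1" and lam: "lam \<ge> 1" and t: "t > 0"
    and X: "\<And>w r s. r \<in> idx k d \<Longrightarrow> s \<in> idx k d \<Longrightarrow> X w r s = (1 / real M) * (\<Sum>l<M. H r s (w l))"
    and H_meas: "\<And>r s. H r s \<in> borel_measurable (count_space UNIV \<Otimes>\<^sub>M lborel_vec d)"
    and H_bilin: "\<And>u v z. \<bar>bilin (idx k d) (\<lambda>r s. H r s z) u v\<bar> \<le>
        real k * (block_norm2 k d u (snd z) + block_norm2 k d v (snd z))"
  shows "measure (sample_space M k d p mu lam) {w \<in> space (sample_space M k d p mu lam).
       t < opnorm (idx k d) (\<lambda>r s. X w r s - (\<integral>w'. X w' r s \<partial>sample_space M k d p mu lam))}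
     \<le> exp (- (rate_const k * (real M / real d) * min t (t\<^sup>2) - (12 * real k * ln 3 + 1)) * real d)"
proof -
  let ?D = "data_dist k d p mu lam"
  let ?I = "idx k d"
  have I: "finite ?I" "?I \<noteq> {}" and card_I: "card ?I = k * d"
    using k d unfolding idx_def by (auto simp: lessThan_empty_iff)
  have "{w \<in> space (sample_space M k d p mu lam).
       t < opnorm ?I (\<lambda>r s. X w r s - (\<integral>w'. X w' r s \<partial>sample_space M k d p mu lam))} =
      {w \<in> space (\<Pi>\<^sub>M l\<in>{..<M}. ?D). t < opnorm ?I (\<lambda>r s. (1 / real M) * (\<Sum>l<M. H r s (w l))
            - (\<integral>w'. (1 / real M) * (\<Sum>l<M. H r s (w' l)) \<partial>(\<Pi>\<^sub>M l\<in>{..<M}. ?D)))}"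
  proof -
    have "opnorm ?I (\<lambda>r s. X w r s - (\<integral>w'. X w' r s \<partial>sample_space M k d p mu lam)) =
        opnorm ?I (\<lambda>r s. (1 / real M) * (\<Sum>l<M. H r s (w l))
          - (\<integral>w'. (1 / real M) * (\<Sum>l<M. H r s (w' l)) \<partial>(\<Pi>\<^sub>M l\<in>{..<M}. ?D)))" for w
      by (rule opnorm_cong) (simp add: X sample_space_def)
    then show ?thesis unfolding sample_space_def by simp
  qed
  also have "measure (\<Pi>\<^sub>M l\<in>{..<M}. ?D) \<dots> \<le> (real (card (sphere_net ?I)))\<^sup>2 *
      (2 * exp (- (real M * chernoff_rate (1 / (64 * (real k)\<^sup>2)) (8 * real k) * min (t/3) ((t/3)\<^sup>2))))"
  proof (rule opnorm_empirical_deviation_tail[OF _ I measurable_data_dist[OF H_meas]])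
    show "prob_space ?D" using p lam by (intro prob_space_data_dist) auto
    show "(\<integral>\<^sup>+z. ennreal (exp (1 / (64 * (real k)\<^sup>2) * \<bar>bilin ?I (\<lambda>r s. H r s z) u v\<bar>)) \<partial>?D)
        \<le> ennreal (8 * real k)"
      if "(\<Sum>r\<in>?I. (u r)\<^sup>2) \<le> 4" "(\<Sum>r\<in>?I. (v r)\<^sup>2) \<le> 4" for u v
      by (rule nn_integral_exp_abs_le[OF k p lam mu that H_bilin])
  qed (use k M t in auto)
  also have "\<dots> \<le> exp (- (rate_const k * (real M / real d) * min t (t\<^sup>2) - (12 * real k * ln 3 + 1)) * real d)"
    unfolding rate_const_def
    by (rule union_bound_exponent_le) (use finite_card_sphere_net[OF I] card_I d rate_const_pos[OF k] t
        in \<open>auto simp: rate_const_def\<close>)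
  finally show ?thesis unfolding sample_space_def .
qed

lemma emp_risk_hess_emp_G_deviation_tail:
  assumes k: "k > 0" and hyps: "d \<ge> 1" "M \<ge> 1" "\<forall>a<k. 0 \<le> p a" "(\<Sum>a<k. p a) = 1"
      "\<forall>a<k. (\<Sum>i<d. (mu a i)\<^sup>2) = 1" "lam \<ge> 1" "t > 0"
  shows "measure (sample_space M k d p mu lam) {w \<in> space (sample_space M k d p mu lam).
       t < opnorm (idx k d) (\<lambda>r s. hess (emp_risk M k d w) x r s
         - (\<integral>w'. hess (emp_risk M k d w') x r s \<partial>sample_space M k d p mu lam))}
     \<le> exp (- (rate_const k * (real M / real d) * min t (t\<^sup>2) - (12 * real k * ln 3 + 1)) * real d)" (is ?hess_tail)
    and "measure (sample_space M k d p mu lam) {w \<in> space (sample_space M k d p mu lam).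
       t < opnorm (idx k d) (\<lambda>r s. emp_G M k d w x r s
         - (\<integral>w'. emp_G M k d w' x r s \<partial>sample_space M k d p mu lam))}
     \<le> exp (- (rate_const k * (real M / real d) * min t (t\<^sup>2) - (12 * real k * ln 3 + 1)) * real d)" (is ?G_tail)
proof -
  have H_bilin: "\<bar>bilin (idx k d) (\<lambda>r s. sample_hess k d x r s z) u v\<bar> \<le>
      real k * (block_norm2 k d u (snd z) + block_norm2 k d v (snd z))" for u v z
  proof -
    have "0 \<le> block_norm2 k d u (snd z) + block_norm2 k d v (snd z)"
      unfolding block_norm2_def by (simp add: sum_nonneg)
    then show ?thesis
      using abs_bilin_sample_hess_le[OF k, of d x z u v] mult_right_mono[of 1 "real k"] k by force
  qed
  have "hess (emp_risk M k d w) x r s = (1 / real M) * (\<Sum>l<M. sample_hess k d x r s (w l))"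
    if "r \<in> idx k d" "s \<in> idx k d" for w r s
    unfolding hess_emp_risk[OF that] sample_hess_def ..
  from empirical_matrix_tail[OF k hyps this measurable_sample_hess H_bilin]
  show ?hess_tail .
  have "emp_G M k d w x r s = (1 / real M) * (\<Sum>l<M. sample_grad_outer k d x r s (w l))"
    if "r \<in> idx k d" "s \<in> idx k d" for w r s
    unfolding emp_G_eq[OF that] sample_grad_outer_def ..
  from empirical_matrix_tail[OF k hyps this measurable_sample_grad_outer abs_bilin_sample_grad_outer_le[OF k]]
  show ?G_tail .
qed

theorem theorem6p1:
  fixes k :: nat
  assumes "k \<ge> 2"
  shows "\<exists>c>0. \<exists>C::real. \<forall>(d::nat) (M::nat) (p::nat \<Rightarrow> real) (mu::nat \<Rightarrow> nat \<Rightarrow> real)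
            (lam::real) (t::real) (x::nat \<Rightarrow> nat \<Rightarrow> real).
     d \<ge> 1 \<and> M \<ge> 1 \<and> (\<forall>a<k. 0 < p a \<and> p a < 1) \<and> (\<Sum>a<k. p a) = 1 \<and>
     (\<forall>a<k. (\<Sum>i<d. (mu a i)\<^sup>2) = 1) \<and> lam \<ge> 1 \<and> t > 0 \<longrightarrow>
     (let \<Omega> = sample_space M k d p mu lam; \<alpha> = real M / real d;
          bound = exp (- (c * \<alpha> * min t (t\<^sup>2) - C) * real d) in
       measure \<Omega> {w \<in> space \<Omega>.
          opnorm (idx k d)
            (\<lambda>r s. hess (emp_risk M k d w) x r s
                    - (\<integral>w'. hess (emp_risk M k d w') x r s \<partial>\<Omega>)) > t} \<le> bound
       \<and>
       measure \<Omega> {w \<in> space \<Omega>.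
          opnorm (idx k d)
            (\<lambda>r s. emp_G M k d w x r s - (\<integral>w'. emp_G M k d w' x r s \<partial>\<Omega>)) > t} \<le> bound)"
proof (rule exI[of _ "rate_const k"], intro conjI exI[of _ "12 * real k * ln 3 + 1"] allI impI)
  show "rate_const k > 0" using assms by (simp add: rate_const_pos)
qed (unfold Let_def, intro conjI emp_risk_hess_emp_G_deviation_tail; use assms in \<open>auto simp: less_imp_le\<close>)

end
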